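(* Let $T_0 \in \mathcal{G}(X)$ be fixed. Then $\mathcal{R}_{T_0}$ is a $G_\delta$ subset of $\mathcal{G}_{T_0}$.
   Context: Let $(X,m)$ and $(Y,\nu)$ both be the unit interval with Lebesgue measure, and $(Z,\mu) = (X\times Y, m\times\nu)$. $\mathcal{G}(W)$ denotes the set of invertible measure-preserving transformations of a space $W$, with the weak topology ($T_n \to T$ iff $\mu(T_nE \triangle TE) \to 0$ for every measurable $E$). $\mathcal{G}_{T_0} \subset \mathcal{G}(Z)$ is the set of transformations of the form $T(x,y) = (T_0x, T_x y)$ with $T_x \in \mathcal{G}(Y)$ (extensions of $T_0$), with the relative weak topology; $T_0$ is identified with $T_0\times\mathrm{id}_Y$ on $Z$. For $f$ on $Z$, $T^nf = f\circ T^n$. $\mathbb{E}(\cdot|X)$ is conditional expectation onto the $\sigma$-algebra of sets $B\times Y$. $L^2(Z|X)$ is the space of $f\in L^2(Z)$ with $\mathbb{E}(|f|^2|X)^{1/2} \in L^\infty(X)$. $T\in\mathcal{G}_{T_0}$ is a rigid extension of $T_0$ if there is a subsequence $n_k$ such that for all $f,g\in L^2(Z|X)$, $\lim_{k\to\infty}\|\mathbb{E}(T^{n_k}f\cdot\overline{g}|X) - \mathbb{E}(T_0^{n_k}f\cdot\overline{g}|X)\|_{L^2(X)} = 0$; $\mathcal{R}_{T_0}$ is the set of rigid extensions. *)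

theory Defs
  imports "HOL-Analysis.Analysis"
begin

text \<open>The unit interval with (Borel-)Lebesgue measure; this is both (X,m) and (Y,nu).\<close>
definition I01 :: "real measure" where
  "I01 = restrict_space lborel {0..1}"

definition Zsp :: "(real \<times> real) measure" where
  "Zsp = I01 \<Otimes>\<^sub>M I01"

definition invmpt :: "'a measure \<Rightarrow> ('a \<Rightarrow> 'a) set" where
  "invmpt W = {T. T \<in> measurable W W \<and> bij_betw T (space W) (space W)
      \<and> the_inv_into (space W) T \<in> measurable W W \<and> distr W W T = W}"

text \<open>Weak topology on G(W): the coarsest topology for which T |-> T E is continuous
  into the measure algebra (metric mu(A \<triangle> B)) for every measurable E; subbasic open sets
  {S. mu(S E \<triangle> A) < eps}.\<close>
definition weak_top :: "'a measure \<Rightarrow> ('a \<Rightarrow> 'a) topology" where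
  "weak_top W = topology_generated_by
     (insert (invmpt W)
       {{S \<in> invmpt W. measure W ((S ` E - A) \<union> (A - S ` E)) < e} | E A e.
          E \<in> sets W \<and> A \<in> sets W \<and> e > 0})"

definition ext_set :: "(real \<Rightarrow> real) \<Rightarrow> (real \<times> real \<Rightarrow> real \<times> real) set" where
  "ext_set T0 = {T \<in> invmpt Zsp. \<exists>Tx :: real \<Rightarrow> real \<Rightarrow> real.
      (\<forall>x\<in>space I01. Tx x \<in> invmpt I01) \<and>
      (\<forall>x\<in>space I01. \<forall>y\<in>space I01. T (x, y) = (T0 x, Tx x y))}"

text \<open>Conditional expectation onto the sigma-algebra of sets B x Y, viewed as a function on X.\<close>
definition condX :: "(real \<times> real \<Rightarrow> complex) \<Rightarrow> real \<Rightarrow> complex" where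
  "condX h x = (\<integral>y. h (x, y) \<partial>I01)"

definition L2ZX :: "(real \<times> real \<Rightarrow> complex) set" where
  "L2ZX = {f. f \<in> borel_measurable Zsp \<and> integrable Zsp (\<lambda>z. (cmod (f z))\<^sup>2) \<and>
      (\<exists>C::real. AE x in I01. (\<integral>\<^sup>+ y. ennreal ((cmod (f (x, y)))\<^sup>2) \<partial>I01) \<le> ennreal C)}"

definition rigid_set :: "(real \<Rightarrow> real) \<Rightarrow> (real \<times> real \<Rightarrow> real \<times> real) set" where
  "rigid_set T0 = {T \<in> ext_set T0. \<exists>n :: nat \<Rightarrow> nat. strict_mono n \<and>
      (\<forall>f\<in>L2ZX. \<forall>g\<in>L2ZX.
         (\<lambda>k. \<integral>\<^sup>+ x. ennreal ((cmod (
              condX (\<lambda>z. f ((T ^^ n k) z) * cnj (g z)) x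
            - condX (\<lambda>z. f ((T0 ^^ n k) (fst z), snd z) * cnj (g z)) x))\<^sup>2) \<partial>I01)
         \<longlonglongrightarrow> 0)}"

end

theory Submission
  imports Defs "HOL-Probability.Probability_Measure"
begin

(* Write Q_T(N; f, g) = || E(T^N f * conj g | X) - E(T0^N f * conj g | X) ||^2 for the rigidity
   defect.  It satisfies Q(f1 + f2, g) <= 2 Q(f1, g) + 2 Q(f2, g), likewise in g, and is bounded by
   4 C ||f||^2 when the fibre norms of g are at most C, and by 4 ||g||^2 when |f| <= 1.  Hence if
   Q_T(n_k; 1_A, 1_B) -> 0 for all A, B in a countable Boolean algebra that is dense in the measure
   algebra of Z, the same holds for all f, g in L^2(Z|X).  Enumerating the pairs (A_i, B_i), R_T0 is
   therefore the intersection over m of the sets of extensions T admitting some N >= m with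
   Q_T(N; 1_A_i, 1_B_i) < 1/(m+1) for all i < m; a diagonal choice of N gives the rigidity sequence.
   Each of these sets is open in the weak topology, because Q_S(N; 1_A, 1_B) exceeds Q_T(N; 1_A, 1_B)
   by at most 4 mu(S^-N A \<triangle> T^-N A), and this telescopes into N weak-topology conditions on S. *)

lemma space_I01 [simp]: "space I01 = {0..1}"
  by (simp add: I01_def)

lemma prob_space_I01: "prob_space I01"
  by (rule prob_spaceI) (simp add: I01_def emeasure_restrict_space)

interpretation I01: prob_space I01
  by (rule prob_space_I01)

lemma space_Zsp [simp]: "space Zsp = {0..1} \<times> {0..1}"
  by (simp add: Zsp_def space_pair_measure)

interpretation Z01: pair_prob_space I01 I01
  by unfold_locales

interpretation Zsp: prob_space Zsp
  unfolding Zsp_def by (rule Z01.P.prob_space_axioms)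

lemma measurable_Pair_section [measurable]:
  "x \<in> space I01 \<Longrightarrow> (\<lambda>y. (x, y)) \<in> measurable I01 Zsp"
  unfolding Zsp_def by measurable

lemma borel_measurable_section:
  "h \<in> borel_measurable Zsp \<Longrightarrow> x \<in> space I01 \<Longrightarrow> (\<lambda>y. h (x, y)) \<in> borel_measurable I01"
  using measurable_comp[OF measurable_Pair_section, of x h] by (simp add: comp_def)

lemma nn_integral_Zsp:
  "f \<in> borel_measurable Zsp \<Longrightarrow> (\<integral>\<^sup>+x. \<integral>\<^sup>+y. f (x, y) \<partial>I01 \<partial>I01) = (\<integral>\<^sup>+z. f z \<partial>Zsp)"
  unfolding Zsp_def by (rule I01.nn_integral_fst)

lemma measure_Zsp_Times:
  "A \<in> sets I01 \<Longrightarrow> B \<in> sets I01 \<Longrightarrow> measure Zsp (A \<times> B) = measure I01 A * measure I01 B"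
  unfolding measure_def Zsp_def by (simp add: I01.emeasure_pair_measure_Times enn2real_mult)

lemma Times_in_sets_Zsp: "A \<in> sets I01 \<Longrightarrow> B \<in> sets I01 \<Longrightarrow> A \<times> B \<in> sets Zsp"
  unfolding Zsp_def by (rule pair_measureI)

section \<open>Measure-preserving maps\<close>

definition measure_preserving :: "'a measure \<Rightarrow> ('a \<Rightarrow> 'a) \<Rightarrow> bool" where
  "measure_preserving M T \<longleftrightarrow> T \<in> measurable M M \<and> distr M M T = M"

lemma measure_preserving_measurable [measurable_dest]:
  "measure_preserving M T \<Longrightarrow> T \<in> measurable M M"
  by (simp add: measure_preserving_def)

lemma measure_preserving_id: "measure_preserving M (\<lambda>x. x)"
  by (simp add: measure_preserving_def distr_id)

lemma measure_preserving_comp: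
  "measure_preserving M T \<Longrightarrow> measure_preserving M S \<Longrightarrow> measure_preserving M (S \<circ> T)"
  unfolding measure_preserving_def by (metis distr_distr measurable_comp)

lemma measure_preserving_funpow: "measure_preserving M T \<Longrightarrow> measure_preserving M (T ^^ n)"
  by (induction n) (auto simp: id_def measure_preserving_id measure_preserving_comp)

lemma invmpt_imp_measure_preserving: "T \<in> invmpt M \<Longrightarrow> measure_preserving M T"
  by (simp add: invmpt_def measure_preserving_def)

lemma measure_preserving_nn_integral:
  assumes "measure_preserving M T" "f \<in> borel_measurable M"
  shows "(\<integral>\<^sup>+z. f (T z) \<partial>M) = (\<integral>\<^sup>+z. f z \<partial>M)"
  using assms nn_integral_distr[of T M M f] by (simp add: measure_preserving_def)

lemma measure_preserving_emeasure_vimage: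
  assumes "measure_preserving M T" "A \<in> sets M"
  shows "emeasure M (T -` A \<inter> space M) = emeasure M A"
  using assms emeasure_distr[of T M M A] by (simp add: measure_preserving_def)

lemma measure_preserving_pair_fst:
  assumes "sigma_finite_measure M" "sigma_finite_measure N" "measure_preserving M T"
  shows "measure_preserving (M \<Otimes>\<^sub>M N) (\<lambda>z. (T (fst z), snd z))"
proof -
  have T: "T \<in> measurable M M" "distr M M T = M"
    using assms(3) by (auto simp: measure_preserving_def)
  have "distr M M T \<Otimes>\<^sub>M distr N N (\<lambda>y. y) = distr (M \<Otimes>\<^sub>M N) (M \<Otimes>\<^sub>M N) (\<lambda>(x, y). (T x, y))"
    using assms(1,2) T by (intro pair_measure_distr) (auto simp: distr_id)
  then show ?thesis
    using T by (simp add: measure_preserving_def distr_id case_prod_beta')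
qed

lemma invmpt_image_sets:
  assumes T: "T \<in> invmpt M" and G: "G \<in> sets M"
  shows "T ` G \<in> sets M"
proof -
  have bij: "bij_betw T (space M) (space M)" and inv: "the_inv_into (space M) T \<in> measurable M M"
    using T by (auto simp: invmpt_def)
  have inj: "inj_on T (space M)" and onto: "T ` space M = space M"
    using bij by (auto simp: bij_betw_def)
  have "T ` G = the_inv_into (space M) T -` G \<inter> space M"
  proof (intro equalityI subsetI)
    fix z
    assume "z \<in> T ` G"
    then show "z \<in> the_inv_into (space M) T -` G \<inter> space M"
      using sets.sets_into_space[OF G] inj onto by (auto simp: the_inv_into_f_f)
  next
    fix z
    assume z: "z \<in> the_inv_into (space M) T -` G \<inter> space M"
    then have "T (the_inv_into (space M) T z) = z"
      using inj onto by (intro f_the_inv_into_f) auto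
    then show "z \<in> T ` G"
      using z by (metis IntD1 image_eqI vimageE)
  qed
  then show ?thesis
    using measurable_sets[OF inv G] by simp
qed

lemma vimage_funpow_Suc:
  assumes "T \<in> space M \<rightarrow> space M"
  shows "(T ^^ Suc n) -` A \<inter> space M = T -` ((T ^^ n) -` A \<inter> space M) \<inter> space M"
  using assms by (auto simp: funpow_swap1)

lemma invmpt_image_funpow_Suc_vimage:
  assumes "T \<in> invmpt M"
  shows "T ` ((T ^^ Suc k) -` A \<inter> space M) = (T ^^ k) -` A \<inter> space M"
proof -
  have onto: "T ` space M = space M"
    using assms by (simp add: invmpt_def bij_betw_def)
  then have "(T ^^ Suc k) -` A \<inter> space M = T -` ((T ^^ k) -` A \<inter> space M) \<inter> space M"
    by (intro vimage_funpow_Suc) blast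
  then have "T ` ((T ^^ Suc k) -` A \<inter> space M) = ((T ^^ k) -` A \<inter> space M) \<inter> T ` space M"
    by blast
  then show ?thesis
    using onto by (metis inf.right_idem)
qed

lemma measure_sym_diff_vimage:
  assumes M: "finite_measure M" and S: "S \<in> invmpt M" and G: "G \<in> sets M" and X: "X \<in> sets M"
  shows "measure M (sym_diff (S -` X \<inter> space M) G) = measure M (sym_diff (S ` G) X)"
proof -
  interpret finite_measure M by (rule M)
  have inj: "inj_on S (space M)" and S_meas: "S \<in> measurable M M"
    using S by (auto simp: invmpt_def bij_betw_def)
  have "sym_diff (S -` X \<inter> space M) G = S -` sym_diff (S ` G) X \<inter> space M"
    using sets.sets_into_space[OF G] inj by (blast dest: inj_onD)
  moreover have "S ` G \<in> sets M"
    by (rule invmpt_image_sets[OF S G])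
  ultimately show ?thesis
    using measure_preserving_emeasure_vimage[OF invmpt_imp_measure_preserving[OF S], of "sym_diff (S ` G) X"] X
    by (simp add: measure_def)
qed

lemma measure_sym_diff_funpow_vimage_le:
  assumes M: "finite_measure M" and S: "S \<in> invmpt M" and T: "T \<in> invmpt M" and A: "A \<in> sets M"
  shows "measure M (sym_diff ((S ^^ N) -` A \<inter> space M) ((T ^^ N) -` A \<inter> space M))
    \<le> (\<Sum>k<N. measure M (sym_diff (S ` ((T ^^ Suc k) -` A \<inter> space M)) ((T ^^ k) -` A \<inter> space M)))"
proof (induction N)
  case 0
  then show ?case
    by simp
next
  case (Suc N)
  interpret finite_measure M by (rule M)
  have S_meas: "S \<in> measurable M M" and T_meas: "T \<in> measurable M M"
    using S T by (auto simp: invmpt_def)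
  define DS where "DS = (S ^^ N) -` A \<inter> space M"
  define DT where "DT = (T ^^ N) -` A \<inter> space M"
  have DS: "DS \<in> sets M" and DT: "DT \<in> sets M"
    unfolding DS_def DT_def
    using A measure_preserving_funpow[OF invmpt_imp_measure_preserving[OF S], of N]
      measure_preserving_funpow[OF invmpt_imp_measure_preserving[OF T], of N]
    by (auto intro!: measurable_sets measure_preserving_measurable)
  have Suc_S: "(S ^^ Suc N) -` A \<inter> space M = S -` DS \<inter> space M"
    unfolding DS_def using measurable_space[OF S_meas] by (intro vimage_funpow_Suc) auto
  have Suc_T: "(T ^^ Suc N) -` A \<inter> space M = T -` DT \<inter> space M"
    unfolding DT_def using measurable_space[OF T_meas] by (intro vimage_funpow_Suc) auto
  have "sym_diff (S -` DS \<inter> space M) (T -` DT \<inter> space M)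
      \<subseteq> (S -` sym_diff DS DT \<inter> space M) \<union> sym_diff (S -` DT \<inter> space M) (T -` DT \<inter> space M)"
    by auto
  then have "measure M (sym_diff ((S ^^ Suc N) -` A \<inter> space M) ((T ^^ Suc N) -` A \<inter> space M))
      \<le> measure M (S -` sym_diff DS DT \<inter> space M) + measure M (sym_diff (S -` DT \<inter> space M) (T -` DT \<inter> space M))"
    unfolding Suc_S Suc_T using DS DT S_meas T_meas
    by (intro order_trans[OF finite_measure_mono measure_Un_le]) (auto intro!: measurable_sets)
  also have "measure M (S -` sym_diff DS DT \<inter> space M) = measure M (sym_diff DS DT)"
    using measure_preserving_emeasure_vimage[OF invmpt_imp_measure_preserving[OF S], of "sym_diff DS DT"] DS DT
    by (simp add: measure_def)
  also have "measure M (sym_diff (S -` DT \<inter> space M) (T -` DT \<inter> space M))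
      = measure M (sym_diff (S ` ((T ^^ Suc N) -` A \<inter> space M)) DT)"
    unfolding Suc_T using DT T_meas by (intro measure_sym_diff_vimage[OF M S]) (auto intro!: measurable_sets)
  also have "measure M (sym_diff DS DT)
      \<le> (\<Sum>k<N. measure M (sym_diff (S ` ((T ^^ Suc k) -` A \<inter> space M)) ((T ^^ k) -` A \<inter> space M)))"
    unfolding DS_def DT_def by (rule Suc.IH)
  finally show ?case
    by (simp only: sum.lessThan_Suc DT_def add_ac)
qed

section \<open>Square-integrable functions\<close>

lemma borel_measurable_cnj [measurable]:
  "f \<in> borel_measurable M \<Longrightarrow> (\<lambda>x. cnj (f x)) \<in> borel_measurable M"
  by (rule borel_measurable_continuous_on[where f = cnj]) (auto intro!: continuous_intros)

lemma cauchy_schwarz_integral: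
  fixes u v :: "'a \<Rightarrow> complex"
  assumes [measurable]: "u \<in> borel_measurable M" "v \<in> borel_measurable M"
    and u: "(\<integral>\<^sup>+y. ennreal ((cmod (u y))\<^sup>2) \<partial>M) < \<infinity>"
    and v: "(\<integral>\<^sup>+y. ennreal ((cmod (v y))\<^sup>2) \<partial>M) < \<infinity>"
  shows "integrable M (\<lambda>y. u y * cnj (v y))"
    and "ennreal ((cmod (\<integral>y. u y * cnj (v y) \<partial>M))\<^sup>2)
           \<le> (\<integral>\<^sup>+y. ennreal ((cmod (u y))\<^sup>2) \<partial>M) * (\<integral>\<^sup>+y. ennreal ((cmod (v y))\<^sup>2) \<partial>M)"
proof -
  let ?P = "\<integral>\<^sup>+y. ennreal (cmod (u y * cnj (v y))) \<partial>M"
  have "?P = (\<integral>\<^sup>+y. ennreal (cmod (u y)) * ennreal (cmod (v y)) \<partial>M)"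
    by (simp add: norm_mult ennreal_mult)
  then have CS: "?P\<^sup>2 \<le> (\<integral>\<^sup>+y. ennreal ((cmod (u y))\<^sup>2) \<partial>M) * (\<integral>\<^sup>+y. ennreal ((cmod (v y))\<^sup>2) \<partial>M)"
    using Cauchy_Schwarz_nn_integral[of "\<lambda>y. ennreal (cmod (u y))" M "\<lambda>y. ennreal (cmod (v y))"]
    by (simp add: ennreal_power)
  also have "\<dots> < \<infinity>"
    using u v by (simp add: ennreal_mult_less_top)
  finally have "?P < \<infinity>"
    by (simp add: power_less_top_ennreal)
  moreover have "(\<lambda>y. u y * cnj (v y)) \<in> borel_measurable M"
    by measurable
  ultimately show int: "integrable M (\<lambda>y. u y * cnj (v y))"
    by (intro integrableI_bounded) auto
  have "ennreal (cmod (\<integral>y. u y * cnj (v y) \<partial>M)) \<le> ?P"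
    using int by (rule integral_norm_bound_ennreal)
  then have "ennreal ((cmod (\<integral>y. u y * cnj (v y) \<partial>M))\<^sup>2) \<le> ?P\<^sup>2"
    by (simp add: ennreal_power[symmetric] power_mono)
  also note CS
  finally show "ennreal ((cmod (\<integral>y. u y * cnj (v y) \<partial>M))\<^sup>2)
      \<le> (\<integral>\<^sup>+y. ennreal ((cmod (u y))\<^sup>2) \<partial>M) * (\<integral>\<^sup>+y. ennreal ((cmod (v y))\<^sup>2) \<partial>M)" .
qed

definition sq_norm :: "(real \<times> real \<Rightarrow> complex) \<Rightarrow> ennreal" where
  "sq_norm f = (\<integral>\<^sup>+z. ennreal ((cmod (f z))\<^sup>2) \<partial>Zsp)"

definition sq_integrable :: "(real \<times> real \<Rightarrow> complex) \<Rightarrow> bool" where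
  "sq_integrable f \<longleftrightarrow> f \<in> borel_measurable Zsp \<and> sq_norm f < \<infinity>"

definition fibre_sq_norm :: "(real \<times> real \<Rightarrow> complex) \<Rightarrow> real \<Rightarrow> ennreal" where
  "fibre_sq_norm h x = (\<integral>\<^sup>+y. ennreal ((cmod (h (x, y)))\<^sup>2) \<partial>I01)"

lemma sq_integrable_measurable [measurable_dest]: "sq_integrable f \<Longrightarrow> f \<in> borel_measurable Zsp"
  by (simp add: sq_integrable_def)

lemma borel_measurable_comp_measure_preserving:
  "measure_preserving M R \<Longrightarrow> f \<in> borel_measurable M \<Longrightarrow> (\<lambda>z. f (R z)) \<in> borel_measurable M"
  using measurable_comp[OF measure_preserving_measurable] by (simp add: comp_def)

lemma sq_norm_comp:
  "measure_preserving Zsp R \<Longrightarrow> f \<in> borel_measurable Zsp \<Longrightarrow> sq_norm (\<lambda>z. f (R z)) = sq_norm f"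
  unfolding sq_norm_def by (rule measure_preserving_nn_integral) auto

lemma sq_integrable_comp:
  "sq_integrable f \<Longrightarrow> measure_preserving Zsp R \<Longrightarrow> sq_integrable (\<lambda>z. f (R z))"
  unfolding sq_integrable_def by (simp add: sq_norm_comp borel_measurable_comp_measure_preserving)

lemma sq_integrable_bounded:
  assumes "f \<in> borel_measurable Zsp" "\<And>z. cmod (f z) \<le> 1"
  shows "sq_integrable f"
proof -
  have "sq_norm f \<le> (\<integral>\<^sup>+z. 1 \<partial>Zsp)"
    unfolding sq_norm_def using assms(2) by (intro nn_integral_mono) (simp add: power_le_one)
  then show ?thesis
    using assms(1) Zsp.emeasure_space_1 by (simp add: sq_integrable_def le_less_trans[OF _ ennreal_one_less_top])
qed

lemma sq_integrable_indicator: "E \<in> sets Zsp \<Longrightarrow> sq_integrable (\<lambda>z. indicator E z :: complex)"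
  by (rule sq_integrable_bounded) (auto simp: indicator_def)

lemma nn_integral_sq_add_le:
  fixes u v w :: "'a \<Rightarrow> complex"
  assumes "u \<in> borel_measurable M" "v \<in> borel_measurable M" "AE x in M. w x = u x + v x"
  shows "(\<integral>\<^sup>+x. ennreal ((cmod (w x))\<^sup>2) \<partial>M)
     \<le> 2 * (\<integral>\<^sup>+x. ennreal ((cmod (u x))\<^sup>2) \<partial>M) + 2 * (\<integral>\<^sup>+x. ennreal ((cmod (v x))\<^sup>2) \<partial>M)"
proof -
  have sq: "ennreal ((cmod (a + b))\<^sup>2) \<le> 2 * ennreal ((cmod a)\<^sup>2) + 2 * ennreal ((cmod b)\<^sup>2)"
    for a b :: complex
  proof -
    have "(cmod (a + b))\<^sup>2 \<le> (cmod a + cmod b)\<^sup>2"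
      by (intro power_mono norm_triangle_ineq) auto
    then have "(cmod (a + b))\<^sup>2 \<le> 2 * (cmod a)\<^sup>2 + 2 * (cmod b)\<^sup>2"
      using sum_squares_bound[of "cmod a" "cmod b"] by (simp add: power2_sum)
    then have "ennreal ((cmod (a + b))\<^sup>2) \<le> ennreal (2 * (cmod a)\<^sup>2 + 2 * (cmod b)\<^sup>2)"
      by (rule ennreal_leI)
    then show ?thesis
      by (simp add: ennreal_plus ennreal_mult)
  qed
  have "(\<integral>\<^sup>+x. ennreal ((cmod (w x))\<^sup>2) \<partial>M)
     \<le> (\<integral>\<^sup>+x. 2 * ennreal ((cmod (u x))\<^sup>2) + 2 * ennreal ((cmod (v x))\<^sup>2) \<partial>M)"
    using assms(3) by (intro nn_integral_mono_AE) (auto elim!: eventually_mono intro: sq)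
  also have "\<dots> = 2 * (\<integral>\<^sup>+x. ennreal ((cmod (u x))\<^sup>2) \<partial>M) + 2 * (\<integral>\<^sup>+x. ennreal ((cmod (v x))\<^sup>2) \<partial>M)"
    using assms(1,2) by (simp add: nn_integral_add nn_integral_cmult)
  finally show ?thesis .
qed

lemma sq_integrable_add:
  assumes "sq_integrable f" "sq_integrable g"
  shows "sq_integrable (\<lambda>z. f z + g z)"
proof -
  have "sq_norm (\<lambda>z. f z + g z) \<le> 2 * sq_norm f + 2 * sq_norm g"
    unfolding sq_norm_def using assms by (intro nn_integral_sq_add_le) auto
  also have "\<dots> < \<infinity>"
    using assms by (simp add: sq_integrable_def ennreal_mult_less_top)
  finally show ?thesis
    using assms by (auto simp: sq_integrable_def)
qed

lemma sq_norm_mult: "f \<in> borel_measurable Zsp \<Longrightarrow> sq_norm (\<lambda>z. c * f z) = ennreal ((cmod c)\<^sup>2) * sq_norm f"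
  unfolding sq_norm_def
  by (subst nn_integral_cmult[symmetric]) (auto simp: norm_mult power_mult_distrib ennreal_mult)

lemma sq_integrable_mult: "sq_integrable f \<Longrightarrow> sq_integrable (\<lambda>z. c * f z)"
  by (auto simp: sq_integrable_def sq_norm_mult ennreal_mult_less_top)

lemma borel_measurable_fibre_sq_norm:
  assumes [measurable]: "h \<in> borel_measurable Zsp"
  shows "fibre_sq_norm h \<in> borel_measurable I01"
proof -
  have "(\<lambda>z. ennreal ((cmod (h z))\<^sup>2)) \<in> borel_measurable Zsp"
    by measurable
  then show ?thesis
    unfolding fibre_sq_norm_def Zsp_def by (intro I01.borel_measurable_nn_integral) (simp add: case_prod_beta')
qed

lemma nn_integral_fibre_sq_norm:
  "h \<in> borel_measurable Zsp \<Longrightarrow> (\<integral>\<^sup>+x. fibre_sq_norm h x \<partial>I01) = sq_norm h"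
  unfolding fibre_sq_norm_def sq_norm_def by (rule nn_integral_Zsp) measurable

lemma AE_fibre_sq_norm_finite: "sq_integrable h \<Longrightarrow> AE x in I01. fibre_sq_norm h x < \<infinity>"
  using nn_integral_PInf_AE[OF borel_measurable_fibre_sq_norm, of h]
  by (simp add: sq_integrable_def nn_integral_fibre_sq_norm less_top)

lemma fibre_sq_norm_le_1:
  assumes "\<And>z. cmod (f z) \<le> 1"
  shows "fibre_sq_norm f x \<le> 1"
proof -
  have "fibre_sq_norm f x \<le> (\<integral>\<^sup>+y. 1 \<partial>I01)"
    unfolding fibre_sq_norm_def using assms by (intro nn_integral_mono) (simp add: power_le_one)
  then show ?thesis
    using I01.emeasure_space_1 by simp
qed

lemma L2ZX_iff:
  "f \<in> L2ZX \<longleftrightarrow> sq_integrable f \<and> (\<exists>C\<ge>0. AE x in I01. fibre_sq_norm f x \<le> ennreal C)"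
proof -
  have "(\<exists>C. AE x in I01. fibre_sq_norm f x \<le> ennreal C) \<longleftrightarrow> (\<exists>C\<ge>0. AE x in I01. fibre_sq_norm f x \<le> ennreal C)"
    by (metis ennreal_neg linorder_le_cases order_refl)
  then show ?thesis
    unfolding L2ZX_def sq_integrable_def sq_norm_def fibre_sq_norm_def
    by (auto simp: integrable_iff_bounded)
qed

lemma indicator_in_L2ZX:
  assumes "E \<in> sets Zsp"
  shows "(\<lambda>z. indicator E z :: complex) \<in> L2ZX"
proof -
  have "fibre_sq_norm (\<lambda>z. indicator E z :: complex) x \<le> ennreal 1" for x
    using fibre_sq_norm_le_1[of "\<lambda>z. indicator E z :: complex" x] by (simp add: indicator_def)
  then have "AE x in I01. fibre_sq_norm (\<lambda>z. indicator E z :: complex) x \<le> ennreal 1"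
    by (rule AE_I2)
  then show ?thesis
    unfolding L2ZX_iff using sq_integrable_indicator[OF assms] zero_le_one by blast
qed

lemma simple_function_indicator_sum:
  fixes F :: "'a \<Rightarrow> 'b::semiring_1"
  assumes "simple_function M F" "z \<in> space M"
  shows "F z = (\<Sum>v\<in>F ` space M. v * indicator (F -` {v} \<inter> space M) z)"
proof -
  have "(\<Sum>v\<in>F ` space M. v * indicator (F -` {v} \<inter> space M) z) = (\<Sum>v\<in>F ` space M. if v = F z then v else 0)"
    using assms(2) by (intro sum.cong) (auto simp: indicator_def)
  also have "\<dots> = F z"
    using assms by (simp add: simple_function_def sum.delta')
  finally show ?thesis
    by simp
qed

lemma norm_diff_sq_le:
  fixes a b :: "'a::real_normed_vector"
  assumes "norm b \<le> 2 * norm a"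
  shows "(norm (a - b))\<^sup>2 \<le> 9 * (norm a)\<^sup>2"
proof -
  have "norm (a - b) \<le> 3 * norm a"
    using norm_triangle_ineq4[of a b] assms by simp
  then have "(norm (a - b))\<^sup>2 \<le> (3 * norm a)\<^sup>2"
    by (intro power_mono) auto
  then show ?thesis
    by (simp add: power_mult_distrib)
qed

lemma sq_norm_diff_tendsto_zero:
  assumes f: "sq_integrable f" and F [measurable]: "\<And>i. F i \<in> borel_measurable Zsp"
    and lim: "\<And>z. z \<in> space Zsp \<Longrightarrow> (\<lambda>i. F i z) \<longlonglongrightarrow> f z"
    and dom: "\<And>i z. z \<in> space Zsp \<Longrightarrow> cmod (F i z) \<le> 2 * cmod (f z)"
  shows "(\<lambda>i. sq_norm (\<lambda>z. f z - F i z)) \<longlonglongrightarrow> 0"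
proof -
  have [measurable]: "f \<in> borel_measurable Zsp"
    using f by (simp add: sq_integrable_def)
  define h where "h i z = (cmod (f z - F i z))\<^sup>2" for i z
  define w where "w z = 9 * (cmod (f z))\<^sup>2" for z
  have [measurable]: "h i \<in> borel_measurable Zsp" for i
    unfolding h_def by measurable
  have "integrable Zsp (\<lambda>z. (cmod (f z))\<^sup>2)"
    using f by (simp add: sq_integrable_def sq_norm_def integrable_iff_bounded)
  then have w: "integrable Zsp w"
    unfolding w_def by (rule integrable_mult_right)
  have bound: "norm (h i z) \<le> w z" if "z \<in> space Zsp" for i z
    using norm_diff_sq_le[OF dom[OF that, of i]] by (simp add: h_def w_def)
  have "(\<lambda>i. integral\<^sup>L Zsp (h i)) \<longlonglongrightarrow> integral\<^sup>L Zsp (\<lambda>z. 0)"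
  proof (rule integral_dominated_convergence[OF _ _ w])
    show "AE z in Zsp. (\<lambda>i. h i z) \<longlonglongrightarrow> 0"
    proof (rule AE_I2)
      fix z
      assume "z \<in> space Zsp"
      then have "(\<lambda>i. (cmod (f z - F i z))\<^sup>2) \<longlonglongrightarrow> (cmod (f z - f z))\<^sup>2"
        by (intro tendsto_intros lim)
      then show "(\<lambda>i. h i z) \<longlonglongrightarrow> 0"
        by (simp add: h_def)
    qed
    show "AE z in Zsp. norm (h i z) \<le> w z" for i
      using bound by (intro AE_I2) blast
  qed simp_all
  moreover have "sq_norm (\<lambda>z. f z - F i z) = ennreal (integral\<^sup>L Zsp (h i))" for i
  proof -
    have "integrable Zsp (h i)"
      by (rule Bochner_Integration.integrable_bound[OF w]) (use bound in \<open>auto intro!: AE_I2 simp: w_def\<close>)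
    then show ?thesis
      unfolding sq_norm_def h_def[symmetric] by (rule nn_integral_eq_integral) (simp add: h_def)
  qed
  ultimately show ?thesis
    using tendsto_ennrealI by fastforce
qed

lemma sq_integrable_approx_simple:
  assumes f: "sq_integrable f" and e: "e > 0"
  shows "\<exists>F. simple_function Zsp F \<and> sq_norm (\<lambda>z. f z - F z) < ennreal e"
proof -
  have f_meas: "f \<in> borel_measurable Zsp"
    using f by (simp add: sq_integrable_def)
  from borel_measurable_implies_sequence_metric[OF f_meas, of 0] obtain F where
    F: "\<And>i. simple_function Zsp (F i)" "\<And>x. x \<in> space Zsp \<Longrightarrow> (\<lambda>i. F i x) \<longlonglongrightarrow> f x"
    "\<And>i x. x \<in> space Zsp \<Longrightarrow> dist (F i x) 0 \<le> 2 * dist (f x) 0"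
    by blast
  have "cmod (F i x) \<le> 2 * cmod (f x)" if "x \<in> space Zsp" for i x
    using F(3)[OF that, of i] by (simp add: dist_norm)
  then have "(\<lambda>i. sq_norm (\<lambda>z. f z - F i z)) \<longlonglongrightarrow> 0"
    by (intro sq_norm_diff_tendsto_zero f borel_measurable_simple_function F(1,2))
  then have "eventually (\<lambda>i. sq_norm (\<lambda>z. f z - F i z) < ennreal e) sequentially"
    using e by (intro order_tendstoD(2)) auto
  then obtain i where "sq_norm (\<lambda>z. f z - F i z) < ennreal e"
    by (auto simp: eventually_sequentially)
  then show ?thesis
    using F(1) by blast
qed

lemma sq_norm_indicator_diff:
  assumes "E \<in> sets Zsp" "A \<in> sets Zsp"
  shows "sq_norm (\<lambda>z. indicator E z - indicator A z :: complex) = ennreal (measure Zsp (sym_diff E A))"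
proof -
  have "sq_norm (\<lambda>z. indicator E z - indicator A z :: complex) = (\<integral>\<^sup>+z. indicator (sym_diff E A) z \<partial>Zsp)"
    unfolding sq_norm_def by (intro nn_integral_cong) (auto simp: indicator_def)
  also have "\<dots> = ennreal (measure Zsp (sym_diff E A))"
    using assms by (simp add: Zsp.emeasure_eq_measure)
  finally show ?thesis .
qed

section \<open>Conditional inner products\<close>

definition cond_inner ::
    "(real \<times> real \<Rightarrow> real \<times> real) \<Rightarrow> (real \<times> real \<Rightarrow> complex) \<Rightarrow> (real \<times> real \<Rightarrow> complex) \<Rightarrow> real \<Rightarrow> complex"
  where "cond_inner R f g = condX (\<lambda>z. f (R z) * cnj (g z))"

definition cond_inner_dist ::
    "(real \<times> real \<Rightarrow> real \<times> real) \<Rightarrow> (real \<times> real \<Rightarrow> real \<times> real) \<Rightarrow>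
     (real \<times> real \<Rightarrow> complex) \<Rightarrow> (real \<times> real \<Rightarrow> complex) \<Rightarrow> ennreal"
  where "cond_inner_dist R S f g = (\<integral>\<^sup>+x. ennreal ((cmod (cond_inner R f g x - cond_inner S f g x))\<^sup>2) \<partial>I01)"

lemma borel_measurable_cond_inner [measurable]:
  assumes [measurable]: "f \<in> borel_measurable Zsp" "g \<in> borel_measurable Zsp" "R \<in> measurable Zsp Zsp"
  shows "cond_inner R f g \<in> borel_measurable I01"
proof -
  have "(\<lambda>z. f (R z) * cnj (g z)) \<in> borel_measurable Zsp"
    by measurable
  then show ?thesis
    unfolding cond_inner_def condX_def[abs_def] Zsp_def
    by (intro I01.borel_measurable_lebesgue_integral) (simp add: case_prod_beta')
qed

lemma cond_inner_cauchy_schwarz: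
  assumes f: "(\<lambda>z. f (R z)) \<in> borel_measurable Zsp" and g: "g \<in> borel_measurable Zsp"
    and x: "x \<in> space I01"
    and fin: "fibre_sq_norm (\<lambda>z. f (R z)) x < \<infinity>" "fibre_sq_norm g x < \<infinity>"
  shows "integrable I01 (\<lambda>y. f (R (x, y)) * cnj (g (x, y)))"
    and "ennreal ((cmod (cond_inner R f g x))\<^sup>2) \<le> fibre_sq_norm (\<lambda>z. f (R z)) x * fibre_sq_norm g x"
  using cauchy_schwarz_integral[OF borel_measurable_section[OF f x] borel_measurable_section[OF g x]] fin
  by (simp_all add: fibre_sq_norm_def cond_inner_def condX_def)

lemma cond_inner_add_left:
  assumes "sq_integrable f1" "sq_integrable f2" "sq_integrable g" "measure_preserving Zsp R"
  shows "AE x in I01. cond_inner R (\<lambda>z. f1 z + f2 z) g x = cond_inner R f1 g x + cond_inner R f2 g x"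
proof -
  have f: "sq_integrable (\<lambda>z. f1 (R z))" "sq_integrable (\<lambda>z. f2 (R z))"
    using assms sq_integrable_comp by auto
  show ?thesis
    using AE_fibre_sq_norm_finite[OF f(1)] AE_fibre_sq_norm_finite[OF f(2)]
      AE_fibre_sq_norm_finite[OF assms(3)] AE_space
  proof eventually_elim
    case (elim x)
    then show ?case
      using cond_inner_cauchy_schwarz(1)[of f1 R g x] cond_inner_cauchy_schwarz(1)[of f2 R g x] f assms(3)
      by (simp add: cond_inner_def condX_def distrib_right sq_integrable_def)
  qed
qed

lemma cond_inner_add_right:
  assumes "sq_integrable f" "sq_integrable g1" "sq_integrable g2" "measure_preserving Zsp R"
  shows "AE x in I01. cond_inner R f (\<lambda>z. g1 z + g2 z) x = cond_inner R f g1 x + cond_inner R f g2 x"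
proof -
  have f: "sq_integrable (\<lambda>z. f (R z))"
    using assms sq_integrable_comp by auto
  show ?thesis
    using AE_fibre_sq_norm_finite[OF f] AE_fibre_sq_norm_finite[OF assms(2)]
      AE_fibre_sq_norm_finite[OF assms(3)] AE_space
  proof eventually_elim
    case (elim x)
    then show ?case
      using cond_inner_cauchy_schwarz(1)[of f R g1 x] cond_inner_cauchy_schwarz(1)[of f R g2 x] f assms(2,3)
      by (simp add: cond_inner_def condX_def distrib_left sq_integrable_def)
  qed
qed

lemma cond_inner_mult_left: "cond_inner R (\<lambda>z. c * f z) g x = c * cond_inner R f g x"
  by (simp add: cond_inner_def condX_def mult.assoc)

lemma cond_inner_mult_right: "cond_inner R f (\<lambda>z. c * g z) x = cnj c * cond_inner R f g x"
  by (simp add: cond_inner_def condX_def mult.left_commute)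

lemma nn_integral_cond_inner_le:
  assumes "sq_integrable (\<lambda>z. f (R z))" "sq_integrable g"
  shows "(\<integral>\<^sup>+x. ennreal ((cmod (cond_inner R f g x))\<^sup>2) \<partial>I01)
      \<le> (\<integral>\<^sup>+x. fibre_sq_norm (\<lambda>z. f (R z)) x * fibre_sq_norm g x \<partial>I01)"
proof (rule nn_integral_mono_AE)
  show "AE x in I01. ennreal ((cmod (cond_inner R f g x))\<^sup>2)
      \<le> fibre_sq_norm (\<lambda>z. f (R z)) x * fibre_sq_norm g x"
    using AE_fibre_sq_norm_finite[OF assms(1)] AE_fibre_sq_norm_finite[OF assms(2)] AE_space
  proof eventually_elim
    case (elim x)
    then show ?case
      using assms by (intro cond_inner_cauchy_schwarz(2)) (simp_all add: sq_integrable_def)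
  qed
qed

lemma nn_integral_cond_inner_le_left:
  assumes "measure_preserving Zsp R" "sq_integrable h" "sq_integrable g"
    and "AE x in I01. fibre_sq_norm g x \<le> K"
  shows "(\<integral>\<^sup>+x. ennreal ((cmod (cond_inner R h g x))\<^sup>2) \<partial>I01) \<le> K * sq_norm h"
proof -
  have h: "sq_integrable (\<lambda>z. h (R z))"
    using assms sq_integrable_comp by auto
  have "(\<integral>\<^sup>+x. ennreal ((cmod (cond_inner R h g x))\<^sup>2) \<partial>I01)
      \<le> (\<integral>\<^sup>+x. fibre_sq_norm (\<lambda>z. h (R z)) x * fibre_sq_norm g x \<partial>I01)"
    by (rule nn_integral_cond_inner_le[of h R g, OF h assms(3)])
  also have "\<dots> \<le> (\<integral>\<^sup>+x. fibre_sq_norm (\<lambda>z. h (R z)) x * K \<partial>I01)"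
    using assms(4) by (intro nn_integral_mono_AE) (auto elim!: eventually_mono intro: mult_left_mono)
  also have "\<dots> = (\<integral>\<^sup>+x. fibre_sq_norm (\<lambda>z. h (R z)) x \<partial>I01) * K"
    using h by (intro nn_integral_multc borel_measurable_fibre_sq_norm) (simp add: sq_integrable_def)
  also have "\<dots> = K * sq_norm h"
    using h assms(1,2) by (simp add: mult.commute nn_integral_fibre_sq_norm sq_integrable_def sq_norm_comp)
  finally show ?thesis .
qed

lemma nn_integral_cond_inner_le_right:
  assumes "measure_preserving Zsp R" "f \<in> borel_measurable Zsp" "\<And>z. cmod (f z) \<le> 1" "sq_integrable h"
  shows "(\<integral>\<^sup>+x. ennreal ((cmod (cond_inner R f h x))\<^sup>2) \<partial>I01) \<le> sq_norm h"
proof -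
  have f: "sq_integrable (\<lambda>z. f (R z))"
    using borel_measurable_comp_measure_preserving[OF assms(1,2)] assms(3) by (rule sq_integrable_bounded)
  have fib: "fibre_sq_norm (\<lambda>z. f (R z)) x \<le> 1" for x
    by (rule fibre_sq_norm_le_1) (rule assms(3))
  have "(\<integral>\<^sup>+x. ennreal ((cmod (cond_inner R f h x))\<^sup>2) \<partial>I01)
      \<le> (\<integral>\<^sup>+x. fibre_sq_norm (\<lambda>z. f (R z)) x * fibre_sq_norm h x \<partial>I01)"
    by (rule nn_integral_cond_inner_le[of f R h, OF f assms(4)])
  also have "\<dots> \<le> (\<integral>\<^sup>+x. fibre_sq_norm h x \<partial>I01)"
    using mult_right_mono[OF fib] by (intro nn_integral_mono) fastforce
  also have "\<dots> = sq_norm h"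
    using assms(4) by (simp add: nn_integral_fibre_sq_norm sq_integrable_def)
  finally show ?thesis .
qed

lemma cond_inner_dist_add_left:
  assumes "measure_preserving Zsp R" "measure_preserving Zsp S"
    and "sq_integrable f1" "sq_integrable f2" "sq_integrable g"
  shows "cond_inner_dist R S (\<lambda>z. f1 z + f2 z) g \<le> 2 * cond_inner_dist R S f1 g + 2 * cond_inner_dist R S f2 g"
proof -
  have meas: "(\<lambda>x. cond_inner R f g x - cond_inner S f g x) \<in> borel_measurable I01"
    if "sq_integrable f" for f
    using assms that by (intro borel_measurable_diff borel_measurable_cond_inner) auto
  have "AE x in I01. cond_inner R (\<lambda>z. f1 z + f2 z) g x - cond_inner S (\<lambda>z. f1 z + f2 z) g x
      = (cond_inner R f1 g x - cond_inner S f1 g x) + (cond_inner R f2 g x - cond_inner S f2 g x)"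
    using cond_inner_add_left[OF assms(3-5,1)] cond_inner_add_left[OF assms(3-5,2)]
    by eventually_elim simp
  then show ?thesis
    unfolding cond_inner_dist_def using assms by (intro nn_integral_sq_add_le meas)
qed

lemma cond_inner_dist_add_right:
  assumes "measure_preserving Zsp R" "measure_preserving Zsp S"
    and "sq_integrable f" "sq_integrable g1" "sq_integrable g2"
  shows "cond_inner_dist R S f (\<lambda>z. g1 z + g2 z) \<le> 2 * cond_inner_dist R S f g1 + 2 * cond_inner_dist R S f g2"
proof -
  have meas: "(\<lambda>x. cond_inner R f g x - cond_inner S f g x) \<in> borel_measurable I01"
    if "sq_integrable g" for g
    using assms that by (intro borel_measurable_diff borel_measurable_cond_inner) auto
  have "AE x in I01. cond_inner R f (\<lambda>z. g1 z + g2 z) x - cond_inner S f (\<lambda>z. g1 z + g2 z) x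
      = (cond_inner R f g1 x - cond_inner S f g1 x) + (cond_inner R f g2 x - cond_inner S f g2 x)"
    using cond_inner_add_right[OF assms(3-5,1)] cond_inner_add_right[OF assms(3-5,2)]
    by eventually_elim simp
  then show ?thesis
    unfolding cond_inner_dist_def using assms by (intro nn_integral_sq_add_le meas)
qed

lemma cond_inner_dist_mult_left:
  assumes "measure_preserving Zsp R" "measure_preserving Zsp S"
    and "f \<in> borel_measurable Zsp" "g \<in> borel_measurable Zsp"
  shows "cond_inner_dist R S (\<lambda>z. c * f z) g = ennreal ((cmod c)\<^sup>2) * cond_inner_dist R S f g"
  unfolding cond_inner_dist_def cond_inner_mult_left right_diff_distrib[symmetric]
  using assms
  by (subst nn_integral_cmult[symmetric]) (auto simp: norm_mult power_mult_distrib ennreal_mult)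

lemma cond_inner_dist_mult_right:
  assumes "measure_preserving Zsp R" "measure_preserving Zsp S"
    and "f \<in> borel_measurable Zsp" "g \<in> borel_measurable Zsp"
  shows "cond_inner_dist R S f (\<lambda>z. c * g z) = ennreal ((cmod c)\<^sup>2) * cond_inner_dist R S f g"
  unfolding cond_inner_dist_def cond_inner_mult_right right_diff_distrib[symmetric]
  using assms
  by (subst nn_integral_cmult[symmetric]) (auto simp: norm_mult power_mult_distrib ennreal_mult)

lemma cond_inner_dist_le_left:
  assumes "measure_preserving Zsp R" "measure_preserving Zsp S" "sq_integrable h" "sq_integrable g"
    and "AE x in I01. fibre_sq_norm g x \<le> K"
  shows "cond_inner_dist R S h g \<le> 4 * (K * sq_norm h)"
proof -
  have "cond_inner_dist R S h g
      \<le> 2 * (\<integral>\<^sup>+x. ennreal ((cmod (cond_inner R h g x))\<^sup>2) \<partial>I01)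
        + 2 * (\<integral>\<^sup>+x. ennreal ((cmod (- cond_inner S h g x))\<^sup>2) \<partial>I01)"
    unfolding cond_inner_dist_def using assms by (intro nn_integral_sq_add_le) auto
  also have "\<dots> \<le> 2 * (K * sq_norm h) + 2 * (K * sq_norm h)"
    using nn_integral_cond_inner_le_left[OF assms(1,3-5)] nn_integral_cond_inner_le_left[OF assms(2-5)]
    by (intro add_mono mult_left_mono) auto
  finally show ?thesis
    by (simp add: distrib_right[symmetric])
qed

lemma cond_inner_dist_le_right:
  assumes "measure_preserving Zsp R" "measure_preserving Zsp S"
    and "f \<in> borel_measurable Zsp" "\<And>z. cmod (f z) \<le> 1" "sq_integrable h"
  shows "cond_inner_dist R S f h \<le> 4 * sq_norm h"
proof -
  have "cond_inner_dist R S f h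
      \<le> 2 * (\<integral>\<^sup>+x. ennreal ((cmod (cond_inner R f h x))\<^sup>2) \<partial>I01)
        + 2 * (\<integral>\<^sup>+x. ennreal ((cmod (- cond_inner S f h x))\<^sup>2) \<partial>I01)"
    unfolding cond_inner_dist_def using assms by (intro nn_integral_sq_add_le) auto
  also have "\<dots> \<le> 2 * sq_norm h + 2 * sq_norm h"
    using nn_integral_cond_inner_le_right[OF assms(1,3-5)] nn_integral_cond_inner_le_right[OF assms(2-5)]
    by (intro add_mono mult_left_mono) auto
  finally show ?thesis
    by (simp add: distrib_right[symmetric])
qed

section \<open>Density of indicators\<close>

lemma tendsto_zero_ennreal_le_sum:
  fixes a b c :: "nat \<Rightarrow> ennreal"
  assumes "\<And>k. a k \<le> 2 * b k + 2 * c k" "b \<longlonglongrightarrow> 0" "c \<longlonglongrightarrow> 0"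
  shows "a \<longlonglongrightarrow> 0"
proof (rule tendsto_sandwich[OF _ _ tendsto_const])
  have "(\<lambda>k. 2 * b k + 2 * c k) \<longlonglongrightarrow> 2 * 0 + 2 * 0"
    using assms(2,3) by (intro tendsto_add ennreal_tendsto_cmult) auto
  then show "(\<lambda>k. 2 * b k + 2 * c k) \<longlonglongrightarrow> 0"
    by simp
qed (use assms(1) in auto)

lemma tendsto_zero_ennreal_approx:
  fixes a :: "nat \<Rightarrow> ennreal"
  assumes "\<And>e. e > 0 \<Longrightarrow> \<exists>c. c \<longlonglongrightarrow> 0 \<and> (\<forall>k. a k \<le> 2 * c k + ennreal e)"
  shows "a \<longlonglongrightarrow> 0"
proof (rule tendsto_zero_ennreal)
  fix r :: real
  assume r: "r > 0"
  then obtain c where c: "c \<longlonglongrightarrow> 0" "\<And>k. a k \<le> 2 * c k + ennreal (r / 4)"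
    using assms[of "r / 4"] by auto
  have "eventually (\<lambda>k. c k < ennreal (r / 4)) sequentially"
    using order_tendstoD(2)[OF c(1)] r by simp
  then show "eventually (\<lambda>k. a k < ennreal r) sequentially"
  proof eventually_elim
    case (elim k)
    have "2 * c k \<le> 2 * ennreal (r / 4)"
      using elim by (intro mult_left_mono) auto
    then have "a k \<le> 2 * ennreal (r / 4) + ennreal (r / 4)"
      by (rule order_trans[OF c(2) add_right_mono])
    also have "\<dots> = ennreal (r / 2) + ennreal (r / 4)"
      using ennreal_mult'[of 2 "r / 4"] by simp
    also have "\<dots> = ennreal (r / 2 + r / 4)"
      using r by (intro ennreal_plus[symmetric]) auto
    also have "\<dots> < ennreal r"
      using r by (intro ennreal_lessI) auto
    finally show ?case .
  qed
qed

lemma indicator_sum_induct: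
  fixes P :: "(real \<times> real \<Rightarrow> complex) \<Rightarrow> bool" and c :: "complex \<Rightarrow> complex"
  assumes indicator: "\<And>E. E \<in> sets Zsp \<Longrightarrow> P (\<lambda>z. indicator E z)"
    and add: "\<And>f1 f2. sq_integrable f1 \<Longrightarrow> sq_integrable f2 \<Longrightarrow> P f1 \<Longrightarrow> P f2 \<Longrightarrow> P (\<lambda>z. f1 z + f2 z)"
    and mult: "\<And>f c. sq_integrable f \<Longrightarrow> P f \<Longrightarrow> P (\<lambda>z. c * f z)"
    and V: "finite V" "\<forall>v\<in>V. E v \<in> sets Zsp"
  shows "P (\<lambda>z. \<Sum>v\<in>V. c v * indicator (E v) z) \<and> sq_integrable (\<lambda>z. \<Sum>v\<in>V. c v * indicator (E v) z)"
  using V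
proof (induction V rule: finite_induct)
  case empty
  have "P (\<lambda>z. 0 * indicator {} z)"
    by (rule mult[OF sq_integrable_indicator indicator]) simp_all
  then show ?case
    by (simp add: sq_integrable_bounded)
next
  case (insert v V)
  then have E: "E v \<in> sets Zsp"
    by simp
  have v: "sq_integrable (\<lambda>z. c v * indicator (E v) z)" "P (\<lambda>z. c v * indicator (E v) z)"
    by (rule sq_integrable_mult[OF sq_integrable_indicator[OF E]],
        rule mult[OF sq_integrable_indicator[OF E] indicator[OF E]])
  have V: "P (\<lambda>z. \<Sum>w\<in>V. c w * indicator (E w) z)" "sq_integrable (\<lambda>z. \<Sum>w\<in>V. c w * indicator (E w) z)"
    using insert.IH insert.prems by simp_all
  have eq: "(\<lambda>z. \<Sum>w\<in>insert v V. c w * indicator (E w) z)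
      = (\<lambda>z. c v * indicator (E v) z + (\<Sum>w\<in>V. c w * indicator (E w) z))"
    using insert(1,2) by (intro ext) (rule sum.insert)
  show ?case
    unfolding eq using add[OF v(1) V(2) v(2) V(1)] sq_integrable_add[OF v(1) V(2)] by blast
qed

lemma sq_integrable_induct:
  fixes P :: "(real \<times> real \<Rightarrow> complex) \<Rightarrow> bool"
  assumes f: "sq_integrable f"
    and \<A>: "\<A> \<subseteq> sets Zsp" "\<And>E e. E \<in> sets Zsp \<Longrightarrow> e > 0 \<Longrightarrow> \<exists>A\<in>\<A>. measure Zsp (sym_diff E A) < e"
    and indicator: "\<And>A. A \<in> \<A> \<Longrightarrow> P (\<lambda>z. indicator A z)"
    and add: "\<And>f1 f2. sq_integrable f1 \<Longrightarrow> sq_integrable f2 \<Longrightarrow> P f1 \<Longrightarrow> P f2 \<Longrightarrow> P (\<lambda>z. f1 z + f2 z)"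
    and mult: "\<And>f c. sq_integrable f \<Longrightarrow> P f \<Longrightarrow> P (\<lambda>z. c * f z)"
    and closed: "\<And>f. sq_integrable f \<Longrightarrow>
      (\<And>e. e > 0 \<Longrightarrow> \<exists>f'. sq_integrable f' \<and> P f' \<and> sq_norm (\<lambda>z. f z - f' z) < ennreal e) \<Longrightarrow> P f"
  shows "P f"
proof -
  have P_indicator: "P (\<lambda>z. indicator E z)" if E: "E \<in> sets Zsp" for E
  proof (rule closed[OF sq_integrable_indicator[OF E]])
    fix e :: real
    assume "e > 0"
    then obtain A where A: "A \<in> \<A>" "measure Zsp (sym_diff E A) < e"
      using \<A>(2)[OF E] by blast
    then have "A \<in> sets Zsp"
      using \<A>(1) by blast
    with A E \<open>e > 0\<close> have "sq_norm (\<lambda>z. indicator E z - indicator A z) < ennreal e"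
      by (simp add: sq_norm_indicator_diff ennreal_lessI)
    then show "\<exists>f'. sq_integrable f' \<and> P f' \<and> sq_norm (\<lambda>z. indicator E z - f' z) < ennreal e"
      using A(1) \<open>A \<in> sets Zsp\<close> sq_integrable_indicator indicator by blast
  qed
  show ?thesis
  proof (rule closed[OF f])
    fix e :: real
    assume "e > 0"
    then obtain F where F: "simple_function Zsp F" "sq_norm (\<lambda>z. f z - F z) < ennreal e"
      using sq_integrable_approx_simple[OF f] by blast
    define s where "s z = (\<Sum>v\<in>F ` space Zsp. v * indicator (F -` {v} \<inter> space Zsp) z)" for z
    have "P s \<and> sq_integrable s"
      unfolding s_def using F(1)
      by (intro indicator_sum_induct[where P = P, OF P_indicator add mult]) (auto simp: simple_function_def)
    moreover have "sq_norm (\<lambda>z. f z - s z) = sq_norm (\<lambda>z. f z - F z)"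
      unfolding sq_norm_def s_def
      by (intro nn_integral_cong) (simp only: simple_function_indicator_sum[OF F(1), symmetric])
    ultimately show "\<exists>f'. sq_integrable f' \<and> P f' \<and> sq_norm (\<lambda>z. f z - f' z) < ennreal e"
      using F(2) by auto
  qed
qed

definition asymp_cond_equiv ::
    "(nat \<Rightarrow> real \<times> real \<Rightarrow> real \<times> real) \<Rightarrow> (nat \<Rightarrow> real \<times> real \<Rightarrow> real \<times> real) \<Rightarrow>
     (real \<times> real \<Rightarrow> complex) \<Rightarrow> (real \<times> real \<Rightarrow> complex) \<Rightarrow> bool"
  where "asymp_cond_equiv R S f g \<longleftrightarrow> (\<lambda>k. cond_inner_dist (R k) (S k) f g) \<longlonglongrightarrow> 0"

context
  fixes R S :: "nat \<Rightarrow> real \<times> real \<Rightarrow> real \<times> real"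
  assumes R: "\<And>k. measure_preserving Zsp (R k)" and S: "\<And>k. measure_preserving Zsp (S k)"
begin

lemma asymp_cond_equiv_add_left:
  "sq_integrable f1 \<Longrightarrow> sq_integrable f2 \<Longrightarrow> sq_integrable g \<Longrightarrow>
    asymp_cond_equiv R S f1 g \<Longrightarrow> asymp_cond_equiv R S f2 g \<Longrightarrow>
    asymp_cond_equiv R S (\<lambda>z. f1 z + f2 z) g"
  unfolding asymp_cond_equiv_def by (rule tendsto_zero_ennreal_le_sum[OF cond_inner_dist_add_left[OF R S]])

lemma asymp_cond_equiv_add_right:
  "sq_integrable f \<Longrightarrow> sq_integrable g1 \<Longrightarrow> sq_integrable g2 \<Longrightarrow>
    asymp_cond_equiv R S f g1 \<Longrightarrow> asymp_cond_equiv R S f g2 \<Longrightarrow>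
    asymp_cond_equiv R S f (\<lambda>z. g1 z + g2 z)"
  unfolding asymp_cond_equiv_def by (rule tendsto_zero_ennreal_le_sum[OF cond_inner_dist_add_right[OF R S]])

lemma asymp_cond_equiv_mult_left:
  "f \<in> borel_measurable Zsp \<Longrightarrow> g \<in> borel_measurable Zsp \<Longrightarrow>
    asymp_cond_equiv R S f g \<Longrightarrow> asymp_cond_equiv R S (\<lambda>z. c * f z) g"
  unfolding asymp_cond_equiv_def cond_inner_dist_mult_left[OF R S]
  using ennreal_tendsto_cmult[of "ennreal ((cmod c)\<^sup>2)"] by fastforce

lemma asymp_cond_equiv_mult_right:
  "f \<in> borel_measurable Zsp \<Longrightarrow> g \<in> borel_measurable Zsp \<Longrightarrow>
    asymp_cond_equiv R S f g \<Longrightarrow> asymp_cond_equiv R S f (\<lambda>z. c * g z)"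
  unfolding asymp_cond_equiv_def cond_inner_dist_mult_right[OF R S]
  using ennreal_tendsto_cmult[of "ennreal ((cmod c)\<^sup>2)"] by fastforce

lemma asymp_cond_equiv_closed_left:
  assumes f: "sq_integrable f" and g: "sq_integrable g"
    and C: "0 \<le> C" "AE x in I01. fibre_sq_norm g x \<le> ennreal C"
    and approx: "\<And>e. e > 0 \<Longrightarrow>
      \<exists>f'. sq_integrable f' \<and> asymp_cond_equiv R S f' g \<and> sq_norm (\<lambda>z. f z - f' z) < ennreal e"
  shows "asymp_cond_equiv R S f g"
  unfolding asymp_cond_equiv_def
proof (rule tendsto_zero_ennreal_approx)
  fix e :: real
  assume e: "e > 0"
  define \<epsilon> where "\<epsilon> = e / (8 * C + 1)"
  have "\<epsilon> > 0"
    using e C by (simp add: \<epsilon>_def)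
  then obtain f' where f': "sq_integrable f'" "asymp_cond_equiv R S f' g" "sq_norm (\<lambda>z. f z - f' z) < ennreal \<epsilon>"
    using approx by blast
  have d: "sq_integrable (\<lambda>z. f z - f' z)"
    using f f'(1) sq_integrable_add[OF f sq_integrable_mult[OF f'(1), of "-1"]] by simp
  have "8 * C * \<epsilon> \<le> e"
    using e C by (simp add: \<epsilon>_def field_simps)
  have small: "2 * cond_inner_dist (R k) (S k) (\<lambda>z. f z - f' z) g \<le> ennreal e" for k
  proof -
    have "cond_inner_dist (R k) (S k) (\<lambda>z. f z - f' z) g \<le> 4 * (ennreal C * sq_norm (\<lambda>z. f z - f' z))"
      by (rule cond_inner_dist_le_left[OF R S d g C(2)])
    also have "\<dots> \<le> 4 * (ennreal C * ennreal \<epsilon>)"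
      using f'(3) by (intro mult_left_mono) auto
    finally have "2 * cond_inner_dist (R k) (S k) (\<lambda>z. f z - f' z) g \<le> 2 * (4 * (ennreal C * ennreal \<epsilon>))"
      by (rule mult_left_mono) simp
    also have "\<dots> = ennreal (8 * C * \<epsilon>)"
      using C \<open>\<epsilon> > 0\<close> by (simp add: ennreal_mult ennreal_mult' mult.assoc[symmetric])
    also have "\<dots> \<le> ennreal e"
      using \<open>8 * C * \<epsilon> \<le> e\<close> by (rule ennreal_leI)
    finally show ?thesis .
  qed
  have split: "cond_inner_dist (R k) (S k) f g
      \<le> 2 * cond_inner_dist (R k) (S k) f' g + 2 * cond_inner_dist (R k) (S k) (\<lambda>z. f z - f' z) g" for k
    using cond_inner_dist_add_left[OF R[of k] S[of k] f'(1) d g] by simp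
  show "\<exists>c. c \<longlonglongrightarrow> 0 \<and> (\<forall>k. cond_inner_dist (R k) (S k) f g \<le> 2 * c k + ennreal e)"
    using f'(2) order_trans[OF split add_left_mono[OF small]] unfolding asymp_cond_equiv_def
    by (intro exI[of _ "\<lambda>k. cond_inner_dist (R k) (S k) f' g"]) simp
qed

lemma asymp_cond_equiv_closed_right:
  assumes f: "f \<in> borel_measurable Zsp" "\<And>z. cmod (f z) \<le> 1" and g: "sq_integrable g"
    and approx: "\<And>e. e > 0 \<Longrightarrow>
      \<exists>g'. sq_integrable g' \<and> asymp_cond_equiv R S f g' \<and> sq_norm (\<lambda>z. g z - g' z) < ennreal e"
  shows "asymp_cond_equiv R S f g"
  unfolding asymp_cond_equiv_def
proof (rule tendsto_zero_ennreal_approx)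
  fix e :: real
  assume e: "e > 0"
  then obtain g' where g': "sq_integrable g'" "asymp_cond_equiv R S f g'" "sq_norm (\<lambda>z. g z - g' z) < ennreal (e / 8)"
    using approx[of "e / 8"] by auto
  have d: "sq_integrable (\<lambda>z. g z - g' z)"
    using sq_integrable_add[OF g sq_integrable_mult[OF g'(1), of "-1"]] by simp
  have small: "2 * cond_inner_dist (R k) (S k) f (\<lambda>z. g z - g' z) \<le> ennreal e" for k
  proof -
    have "cond_inner_dist (R k) (S k) f (\<lambda>z. g z - g' z) \<le> 4 * sq_norm (\<lambda>z. g z - g' z)"
      by (rule cond_inner_dist_le_right[OF R S f d])
    also have "\<dots> \<le> 4 * ennreal (e / 8)"
      using g'(3) by (intro mult_left_mono) auto
    finally have "2 * cond_inner_dist (R k) (S k) f (\<lambda>z. g z - g' z) \<le> 2 * (4 * ennreal (e / 8))"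
      by (rule mult_left_mono) simp
    also have "\<dots> = ennreal e"
      using ennreal_mult'[of 8 "e / 8"] by (simp add: mult.assoc[symmetric])
    finally show ?thesis .
  qed
  have split: "cond_inner_dist (R k) (S k) f g
      \<le> 2 * cond_inner_dist (R k) (S k) f g' + 2 * cond_inner_dist (R k) (S k) f (\<lambda>z. g z - g' z)" for k
    using cond_inner_dist_add_right[OF R[of k] S[of k] sq_integrable_bounded[OF f] g'(1) d] by simp
  show "\<exists>c. c \<longlonglongrightarrow> 0 \<and> (\<forall>k. cond_inner_dist (R k) (S k) f g \<le> 2 * c k + ennreal e)"
    using g'(2) order_trans[OF split add_left_mono[OF small]] unfolding asymp_cond_equiv_def
    by (intro exI[of _ "\<lambda>k. cond_inner_dist (R k) (S k) f g'"]) simp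
qed

lemma asymp_cond_equiv_indicator_left:
  assumes \<A>: "\<A> \<subseteq> sets Zsp" "\<And>E e. E \<in> sets Zsp \<Longrightarrow> e > 0 \<Longrightarrow> \<exists>A\<in>\<A>. measure Zsp (sym_diff E A) < e"
    and indicators: "\<And>B. B \<in> \<A> \<Longrightarrow> asymp_cond_equiv R S (\<lambda>z. indicator A z) (\<lambda>z. indicator B z)"
    and A: "A \<in> sets Zsp" and h: "sq_integrable h"
  shows "asymp_cond_equiv R S (\<lambda>z. indicator A z) h"
proof -
  have A_meas: "(\<lambda>z. indicator A z :: complex) \<in> borel_measurable Zsp"
    using A by (intro borel_measurable_indicator)
  have A_bound: "cmod (indicator A z :: complex) \<le> 1" for z
    by (simp add: indicator_def)
  show ?thesis
    using h \<A>
  proof (rule sq_integrable_induct[where P = "asymp_cond_equiv R S (\<lambda>z. indicator A z)"])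
    show "asymp_cond_equiv R S (\<lambda>z. indicator A z) (\<lambda>z. indicator B z)" if "B \<in> \<A>" for B
      using that by (rule indicators)
    show "asymp_cond_equiv R S (\<lambda>z. indicator A z) (\<lambda>z. h1 z + h2 z)"
      if "sq_integrable h1" "sq_integrable h2"
        "asymp_cond_equiv R S (\<lambda>z. indicator A z) h1" "asymp_cond_equiv R S (\<lambda>z. indicator A z) h2" for h1 h2
      using A that by (intro asymp_cond_equiv_add_right sq_integrable_indicator)
    show "asymp_cond_equiv R S (\<lambda>z. indicator A z) (\<lambda>z. c * h1 z)"
      if "sq_integrable h1" "asymp_cond_equiv R S (\<lambda>z. indicator A z) h1" for h1 c
      using that A_meas by (intro asymp_cond_equiv_mult_right) (auto simp: sq_integrable_def)
    show "asymp_cond_equiv R S (\<lambda>z. indicator A z) h1"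
      if "sq_integrable h1" "\<And>e. e > 0 \<Longrightarrow> \<exists>h'. sq_integrable h' \<and>
        asymp_cond_equiv R S (\<lambda>z. indicator A z) h' \<and> sq_norm (\<lambda>z. h1 z - h' z) < ennreal e" for h1
      by (rule asymp_cond_equiv_closed_right[OF A_meas A_bound that])
  qed
qed

theorem asymp_cond_equiv_L2ZX:
  assumes \<A>: "\<A> \<subseteq> sets Zsp" "\<And>E e. E \<in> sets Zsp \<Longrightarrow> e > 0 \<Longrightarrow> \<exists>A\<in>\<A>. measure Zsp (sym_diff E A) < e"
    and indicators: "\<And>A B. A \<in> \<A> \<Longrightarrow> B \<in> \<A> \<Longrightarrow>
      asymp_cond_equiv R S (\<lambda>z. indicator A z) (\<lambda>z. indicator B z)"
    and f: "f \<in> L2ZX" and g: "g \<in> L2ZX"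
  shows "asymp_cond_equiv R S f g"
proof -
  obtain C where C: "0 \<le> C" "AE x in I01. fibre_sq_norm g x \<le> ennreal C" and g2: "sq_integrable g"
    using g by (auto simp: L2ZX_iff)
  have f2: "sq_integrable f"
    using f by (simp add: L2ZX_iff)
  show ?thesis
    using f2 \<A>
  proof (rule sq_integrable_induct[where P = "\<lambda>f. asymp_cond_equiv R S f g"])
    show "asymp_cond_equiv R S (\<lambda>z. indicator A z) g" if "A \<in> \<A>" for A
      using that \<A>(1) by (intro asymp_cond_equiv_indicator_left[OF \<A> indicators _ g2]) auto
    show "asymp_cond_equiv R S (\<lambda>z. f1 z + f2 z) g"
      if "sq_integrable f1" "sq_integrable f2" "asymp_cond_equiv R S f1 g" "asymp_cond_equiv R S f2 g" for f1 f2
      using that g2 by (intro asymp_cond_equiv_add_left)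
    show "asymp_cond_equiv R S (\<lambda>z. c * f1 z) g" if "sq_integrable f1" "asymp_cond_equiv R S f1 g" for f1 c
      using that g2 by (intro asymp_cond_equiv_mult_left) (auto simp: sq_integrable_def)
    show "asymp_cond_equiv R S f1 g"
      if "sq_integrable f1" "\<And>e. e > 0 \<Longrightarrow> \<exists>f'. sq_integrable f' \<and>
        asymp_cond_equiv R S f' g \<and> sq_norm (\<lambda>z. f1 z - f' z) < ennreal e" for f1
      by (rule asymp_cond_equiv_closed_left[OF that(1) g2 C that(2)])
  qed
qed

end

section \<open>A countable dense algebra of sets\<close>

(* The Boolean algebra generated by G is built in countably many stages so that it is visibly
   countable when G is. *)
fun bool_closure_level :: "'a set \<Rightarrow> 'a set set \<Rightarrow> nat \<Rightarrow> 'a set set" where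
  "bool_closure_level \<Omega> G 0 = insert {} G"
| "bool_closure_level \<Omega> G (Suc n) = bool_closure_level \<Omega> G n \<union> (\<lambda>a. \<Omega> - a) ` bool_closure_level \<Omega> G n
      \<union> (\<lambda>(a, b). a \<union> b) ` (bool_closure_level \<Omega> G n \<times> bool_closure_level \<Omega> G n)"

definition bool_closure :: "'a set \<Rightarrow> 'a set set \<Rightarrow> 'a set set" where
  "bool_closure \<Omega> G = (\<Union>n. bool_closure_level \<Omega> G n)"

lemma bool_closure_level_mono: "m \<le> n \<Longrightarrow> bool_closure_level \<Omega> G m \<subseteq> bool_closure_level \<Omega> G n"
  by (rule lift_Suc_mono_le[of "bool_closure_level \<Omega> G"]) auto

lemma generator_in_bool_closure: "a \<in> G \<Longrightarrow> a \<in> bool_closure \<Omega> G"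
  unfolding bool_closure_def by (rule UN_I[of 0]) simp_all

lemma empty_in_bool_closure: "{} \<in> bool_closure \<Omega> G"
  unfolding bool_closure_def by (rule UN_I[of 0]) simp_all

lemma algebra_bool_closure:
  assumes "G \<subseteq> Pow \<Omega>"
  shows "algebra \<Omega> (bool_closure \<Omega> G)"
  unfolding algebra_iff_Un
proof (intro conjI ballI)
  have "bool_closure_level \<Omega> G n \<subseteq> Pow \<Omega>" for n
    using assms by (induction n) auto
  then show "bool_closure \<Omega> G \<subseteq> Pow \<Omega>"
    by (auto simp: bool_closure_def)
  show "{} \<in> bool_closure \<Omega> G"
    by (rule empty_in_bool_closure)
  fix a
  assume "a \<in> bool_closure \<Omega> G"
  then obtain m where a: "a \<in> bool_closure_level \<Omega> G m"
    by (auto simp: bool_closure_def)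
  then have "\<Omega> - a \<in> bool_closure_level \<Omega> G (Suc m)"
    by simp
  then show "\<Omega> - a \<in> bool_closure \<Omega> G"
    unfolding bool_closure_def by blast
  fix b
  assume "b \<in> bool_closure \<Omega> G"
  then obtain k where "b \<in> bool_closure_level \<Omega> G k"
    by (auto simp: bool_closure_def)
  with a have "a \<in> bool_closure_level \<Omega> G (max m k)" "b \<in> bool_closure_level \<Omega> G (max m k)"
    using bool_closure_level_mono[of m "max m k" \<Omega> G] bool_closure_level_mono[of k "max m k" \<Omega> G] by auto
  then have "a \<union> b \<in> bool_closure_level \<Omega> G (Suc (max m k))"
    by (auto intro!: image_eqI[of _ _ "(a, b)"])
  then show "a \<union> b \<in> bool_closure \<Omega> G"
    unfolding bool_closure_def by blast
qed

lemma countable_bool_closure: "countable G \<Longrightarrow> countable (bool_closure \<Omega> G)"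
proof -
  assume "countable G"
  then have "countable (bool_closure_level \<Omega> G n)" for n
    by (induction n) (auto intro!: countable_image countable_SIGMA)
  then show ?thesis
    by (simp add: bool_closure_def)
qed

lemma bool_closure_subset_sets: "G \<subseteq> sets M \<Longrightarrow> bool_closure (space M) G \<subseteq> sets M"
proof -
  assume "G \<subseteq> sets M"
  then have "bool_closure_level (space M) G n \<subseteq> sets M" for n
    by (induction n) auto
  then show ?thesis
    by (auto simp: bool_closure_def)
qed

lemma (in finite_measure) measure_Union_diff_finite_less:
  fixes A :: "nat \<Rightarrow> 'a set"
  assumes A: "\<And>i. A i \<in> sets M" and e: "e > 0"
  shows "\<exists>n. measure M (\<Union>(range A) - (\<Union>i<n. A i)) < e"
proof -
  have "incseq (\<lambda>n. \<Union>i<n. A i)"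
    by (intro monoI UN_mono) auto
  moreover have "(\<Union>n. \<Union>i<n. A i) = \<Union>(range A)"
    by blast
  ultimately have "(\<lambda>n. measure M (\<Union>i<n. A i)) \<longlonglongrightarrow> measure M (\<Union>(range A))"
    using finite_Lim_measure_incseq[of "\<lambda>n. \<Union>i<n. A i"] A by (auto simp: image_subset_iff)
  then have "eventually (\<lambda>n. measure M (\<Union>(range A)) - e < measure M (\<Union>i<n. A i)) sequentially"
    using e by (intro order_tendstoD(1)) auto
  then obtain n where "measure M (\<Union>(range A)) - e < measure M (\<Union>i<n. A i)"
    by (auto simp: eventually_sequentially)
  then show ?thesis
    using A by (intro exI[of _ n]) (subst finite_measure_Diff, auto)
qed

lemma approx_by_algebra_Union:
  fixes A :: "nat \<Rightarrow> 'a set"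
  assumes M: "finite_measure M" and \<A>: "algebra (space M) \<A>" "\<A> \<subseteq> sets M"
    and A: "\<And>i. A i \<in> sets M" "\<And>i e. e > 0 \<Longrightarrow> \<exists>a\<in>\<A>. measure M (sym_diff (A i) a) < e"
    and e: "e > 0"
  shows "\<exists>b\<in>\<A>. measure M (sym_diff (\<Union>(range A)) b) < e"
proof -
  interpret finite_measure M by (rule M)
  interpret \<A>: algebra "space M" \<A> by (rule \<A>(1))
  obtain n where n: "measure M (\<Union>(range A) - (\<Union>i<n. A i)) < e / 2"
    using measure_Union_diff_finite_less[of A "e / 2"] A(1) e by auto
  define d where "d = e / (2 * (real n + 1))"
  have "d > 0"
    using e by (simp add: d_def)
  then have "\<forall>i. \<exists>a. a \<in> \<A> \<and> measure M (sym_diff (A i) a) < d"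
    using A(2) by blast
  then obtain a where a: "\<And>i. a i \<in> \<A>" "\<And>i. measure M (sym_diff (A i) (a i)) < d"
    by metis
  have a_sets: "a i \<in> sets M" for i
    using a(1) \<A>(2) by auto
  have "measure M (sym_diff (\<Union>(range A)) (\<Union>i<n. a i))
      \<le> measure M ((\<Union>(range A) - (\<Union>i<n. A i)) \<union> (\<Union>i<n. sym_diff (A i) (a i)))"
    using A(1) a_sets by (intro finite_measure_mono) auto
  also have "\<dots> \<le> measure M (\<Union>(range A) - (\<Union>i<n. A i)) + measure M (\<Union>i<n. sym_diff (A i) (a i))"
    using A(1) a_sets by (intro measure_Un_le) auto
  also have "measure M (\<Union>i<n. sym_diff (A i) (a i)) \<le> (\<Sum>i<n. measure M (sym_diff (A i) (a i)))"
    using A(1) a_sets by (intro finite_measure_subadditive_finite) auto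
  also have "\<dots> \<le> real n * d"
    using sum_mono[of "{..<n}" "\<lambda>i. measure M (sym_diff (A i) (a i))" "\<lambda>_. d"] a(2)
    by (simp add: less_imp_le)
  also have "measure M (\<Union>(range A) - (\<Union>i<n. A i)) + real n * d < e"
  proof -
    have "real n * d \<le> e / 2"
      using e by (simp add: d_def field_simps)
    then show ?thesis
      using n by linarith
  qed
  finally show ?thesis
    using a(1) by (intro bexI[of _ "\<Union>i<n. a i"] \<A>.finite_UN) auto
qed

lemma sigma_sets_approx_by_algebra:
  assumes M: "finite_measure M"
    and \<A>: "algebra (space M) \<A>" "\<A> \<subseteq> sets M"
    and G: "G \<subseteq> sets M" "\<And>g e. g \<in> G \<Longrightarrow> e > 0 \<Longrightarrow> \<exists>a\<in>\<A>. measure M (sym_diff g a) < e"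
    and E: "E \<in> sigma_sets (space M) G" and e: "e > 0"
  shows "\<exists>a\<in>\<A>. measure M (sym_diff E a) < e"
proof -
  interpret \<A>: algebra "space M" \<A> by (rule \<A>(1))
  from E have "E \<in> sets M \<and> (\<forall>e>0. \<exists>a\<in>\<A>. measure M (sym_diff E a) < e)"
  proof induction
    case (Basic g)
    then show ?case
      using G by auto
  next
    case Empty
    then show ?case
      by (auto intro!: bexI[of _ "{}"])
  next
    case (Compl a)
    then have "a \<in> sets M"
      by simp
    then have "sym_diff (space M - a) (space M - b) = sym_diff a b" if "b \<in> \<A>" for b
      using that \<A>(2) sets.sets_into_space by blast
    with Compl show ?case
      by (metis \<A>.compl_sets sets.compl_sets)
  next
    case (Union A)
    then show ?case
      using approx_by_algebra_Union[OF M \<A>, of A] by auto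
  qed
  with e show ?thesis
    by blast
qed

lemma sets_I01_generated: "sets I01 = sigma_sets {0..1} ((\<inter>) {0..1} ` range lessThan)"
proof -
  have "sets I01 = (\<inter>) {0..1} ` sets (borel :: real measure)"
    by (simp add: I01_def sets_restrict_space)
  also have "\<dots> = sigma_sets {0..1} ((\<inter>) {0..1} ` range lessThan)"
  proof -
    have "sets (borel :: real measure) = sigma_sets UNIV (range lessThan)"
      by (subst borel_Iio) (simp add: sets_measure_of)
    moreover have "{0..1::real} \<in> sets borel"
      by simp
    ultimately show ?thesis
      by (simp add: sigma_sets_Int)
  qed
  finally show ?thesis .
qed

definition rational_interval_algebra :: "real set set" where
  "rational_interval_algebra = bool_closure {0..1} (range (\<lambda>q. {0..1} \<inter> {..<real_of_rat q}))"

lemma rational_interval_algebra_sets: "rational_interval_algebra \<subseteq> sets I01"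
proof -
  have "range (\<lambda>q. {0..1} \<inter> {..<real_of_rat q}) \<subseteq> sets I01"
    unfolding sets_I01_generated by (auto intro: sigma_sets.Basic)
  then show ?thesis
    unfolding rational_interval_algebra_def using bool_closure_subset_sets[of _ I01] by simp
qed

lemma algebra_rational_interval_algebra: "algebra {0..1} rational_interval_algebra"
  unfolding rational_interval_algebra_def by (rule algebra_bool_closure) auto

lemma countable_rational_interval_algebra: "countable rational_interval_algebra"
  unfolding rational_interval_algebra_def by (intro countable_bool_closure) simp

lemma measure_I01_le_interval:
  assumes "X \<in> sets I01" "X \<subseteq> {l..u}" "l \<le> u"
  shows "measure I01 X \<le> u - l"
proof -
  have "emeasure I01 X = emeasure lborel X"
    using assms(1) unfolding I01_def by (subst emeasure_restrict_space) (auto simp: sets_restrict_space)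
  also have "\<dots> \<le> emeasure lborel {l..u}"
    using assms(1,2) by (intro emeasure_mono) (auto simp: I01_def sets_restrict_space)
  also have "\<dots> = ennreal (u - l)"
    using assms(3) by simp
  finally show ?thesis
    using assms(3) by (simp add: measure_def enn2real_leI)
qed

lemma rational_interval_algebra_dense:
  assumes "E \<in> sets I01" "e > 0"
  shows "\<exists>a\<in>rational_interval_algebra. measure I01 (sym_diff E a) < e"
proof (rule sigma_sets_approx_by_algebra[OF I01.finite_measure_axioms _ _ _ _ _ assms(2)])
  show "algebra (space I01) rational_interval_algebra" "rational_interval_algebra \<subseteq> sets I01"
    by (simp_all add: algebra_rational_interval_algebra rational_interval_algebra_sets)
  show "(\<inter>) {0..1} ` range lessThan \<subseteq> sets I01" "E \<in> sigma_sets (space I01) ((\<inter>) {0..1} ` range lessThan)"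
    using assms(1) unfolding sets_I01_generated by (auto intro: sigma_sets.Basic)
  fix g :: "real set" and d :: real
  assume "g \<in> (\<inter>) {0..1} ` range lessThan" and d: "d > 0"
  then obtain a where g: "g = {0..1} \<inter> {..<a}"
    by auto
  obtain q where q: "a < real_of_rat q" "real_of_rat q < a + d"
    using of_rat_dense[of a "a + d"] d by auto
  let ?b = "{0..1} \<inter> {..<real_of_rat q}"
  have "?b \<in> rational_interval_algebra"
    unfolding rational_interval_algebra_def by (rule generator_in_bool_closure) simp
  moreover have "g \<in> sets I01" "?b \<in> sets I01"
    unfolding g sets_I01_generated by (auto intro: sigma_sets.Basic)
  then have "measure I01 (sym_diff g ?b) \<le> real_of_rat q - a"
    using q unfolding g by (intro measure_I01_le_interval sets.Un sets.Diff) auto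
  ultimately show "\<exists>b\<in>rational_interval_algebra. measure I01 (sym_diff g b) < d"
    using q by force
qed

definition rectangle_algebra :: "(real \<times> real) set set" where
  "rectangle_algebra = bool_closure ({0..1} \<times> {0..1})
     ((\<lambda>(a, b). a \<times> b) ` (rational_interval_algebra \<times> rational_interval_algebra))"

lemma rectangle_algebra_sets: "rectangle_algebra \<subseteq> sets Zsp"
proof -
  have "(\<lambda>(a, b). a \<times> b) ` (rational_interval_algebra \<times> rational_interval_algebra) \<subseteq> sets Zsp"
    using rational_interval_algebra_sets by (auto intro!: Times_in_sets_Zsp)
  then show ?thesis
    unfolding rectangle_algebra_def using bool_closure_subset_sets[of _ Zsp] by simp
qed

lemma countable_rectangle_algebra: "countable rectangle_algebra"
  unfolding rectangle_algebra_def using countable_rational_interval_algebra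
  by (intro countable_bool_closure countable_image countable_SIGMA)

lemma rectangle_algebra_dense:
  assumes "E \<in> sets Zsp" "e > 0"
  shows "\<exists>c\<in>rectangle_algebra. measure Zsp (sym_diff E c) < e"
proof (rule sigma_sets_approx_by_algebra[OF Zsp.finite_measure_axioms _ rectangle_algebra_sets _ _ _ assms(2)])
  have "(\<lambda>(a, b). a \<times> b) ` (rational_interval_algebra \<times> rational_interval_algebra) \<subseteq> Pow ({0..1} \<times> {0..1})"
    using rational_interval_algebra_sets sets.sets_into_space[of _ I01] by auto
  then show "algebra (space Zsp) rectangle_algebra"
    unfolding rectangle_algebra_def by (simp add: algebra_bool_closure)
  let ?G = "{a \<times> b | a b. a \<in> sets I01 \<and> b \<in> sets I01}"
  show "?G \<subseteq> sets Zsp"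
    by (auto intro: Times_in_sets_Zsp)
  show "E \<in> sigma_sets (space Zsp) ?G"
    using assms(1) unfolding Zsp_def sets_pair_measure space_pair_measure .
  fix g and d :: real
  assume "g \<in> ?G" "d > 0"
  then obtain a b where g: "g = a \<times> b" and ab: "a \<in> sets I01" "b \<in> sets I01"
    by blast
  obtain a' where a': "a' \<in> rational_interval_algebra" "measure I01 (sym_diff a a') < d / 2"
    using rational_interval_algebra_dense[OF ab(1), of "d / 2"] \<open>d > 0\<close> by auto
  obtain b' where b': "b' \<in> rational_interval_algebra" "measure I01 (sym_diff b b') < d / 2"
    using rational_interval_algebra_dense[OF ab(2), of "d / 2"] \<open>d > 0\<close> by auto
  have a'b': "a' \<in> sets I01" "b' \<in> sets I01"
    using a'(1) b'(1) rational_interval_algebra_sets by auto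
  have sub: "sym_diff (a \<times> b) (a' \<times> b') \<subseteq> sym_diff a a' \<times> {0..1} \<union> {0..1} \<times> sym_diff b b'"
    using ab a'b' sets.sets_into_space[of _ I01] by auto
  have "measure Zsp (sym_diff (a \<times> b) (a' \<times> b'))
      \<le> measure Zsp (sym_diff a a' \<times> {0..1}) + measure Zsp ({0..1} \<times> sym_diff b b')"
    using ab a'b'
    by (intro order_trans[OF Zsp.finite_measure_mono[OF sub] measure_Un_le]
        sets.Un Times_in_sets_Zsp sets.Diff) (auto simp: sets.top[of I01, simplified])
  also have "\<dots> = measure I01 (sym_diff a a') + measure I01 (sym_diff b b')"
    using ab a'b' I01.prob_space by (simp add: measure_Zsp_Times sets.top[of I01, simplified])
  also have "\<dots> < d"
    using a'(2) b'(2) by simp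
  finally have "measure Zsp (sym_diff g (a' \<times> b')) < d"
    unfolding g .
  moreover have "a' \<times> b' \<in> rectangle_algebra"
    unfolding rectangle_algebra_def using a'(1) b'(1) by (auto intro!: generator_in_bool_closure)
  ultimately show "\<exists>c\<in>rectangle_algebra. measure Zsp (sym_diff g c) < d"
    by blast
qed

section \<open>Upper semicontinuity in the weak topology\<close>

lemma ennreal_norm_integral_le:
  fixes f :: "'a \<Rightarrow> 'b::{banach, second_countable_topology}"
  shows "ennreal (norm (integral\<^sup>L M f)) \<le> (\<integral>\<^sup>+x. ennreal (norm (f x)) \<partial>M)"
  by (cases "integrable M f") (auto simp: integral_norm_bound_ennreal not_integrable_integral_eq)

lemma norm_sq_le_norm_sq_add:
  fixes u v :: "'a::real_normed_vector"
  assumes "norm u \<le> 2" "norm v \<le> 2"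
  shows "(norm u)\<^sup>2 \<le> (norm v)\<^sup>2 + 4 * norm (u - v)"
proof -
  have "(norm u)\<^sup>2 - (norm v)\<^sup>2 = (norm u - norm v) * (norm u + norm v)"
    by (simp add: power2_eq_square algebra_simps)
  also have "\<dots> \<le> norm (u - v) * 4"
  proof (cases "norm u \<le> norm v")
    case True
    then show ?thesis
      by (smt (verit) mult_nonpos_nonneg norm_ge_zero)
  next
    case False
    then show ?thesis
      using assms norm_triangle_ineq2[of u v] by (intro mult_mono) auto
  qed
  finally show ?thesis
    by simp
qed

lemma cmod_cond_inner_indicator_le: "cmod (cond_inner R (\<lambda>z. indicator A z) (\<lambda>z. indicator B z) x) \<le> 1"
proof -
  have "ennreal (cmod (cond_inner R (\<lambda>z. indicator A z) (\<lambda>z. indicator B z) x))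
      \<le> (\<integral>\<^sup>+y. ennreal (cmod (indicator A (R (x, y)) * cnj (indicator B (x, y) :: complex))) \<partial>I01)"
    unfolding cond_inner_def condX_def by (rule ennreal_norm_integral_le)
  also have "\<dots> \<le> (\<integral>\<^sup>+y. 1 \<partial>I01)"
    by (intro nn_integral_mono) (auto simp: indicator_def)
  finally show ?thesis
    using I01.emeasure_space_1 by simp
qed

lemma cond_inner_indicator_diff_le:
  assumes S: "measure_preserving Zsp S" and T: "measure_preserving Zsp T"
    and A: "A \<in> sets Zsp" and B: "B \<in> sets Zsp" and x: "x \<in> space I01"
  shows "ennreal (cmod (cond_inner S (\<lambda>z. indicator A z) (\<lambda>z. indicator B z) x
                      - cond_inner T (\<lambda>z. indicator A z) (\<lambda>z. indicator B z) x))
    \<le> (\<integral>\<^sup>+y. indicator (sym_diff (S -` A \<inter> space Zsp) (T -` A \<inter> space Zsp)) (x, y) \<partial>I01)"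
proof -
  have int: "integrable I01 (\<lambda>y. indicator A (R (x, y)) * cnj (indicator B (x, y) :: complex))"
    if "measure_preserving Zsp R" for R
  proof (rule I01.integrable_const_bound)
    show "AE y in I01. norm (indicator A (R (x, y)) * cnj (indicator B (x, y) :: complex)) \<le> 1"
      by (intro AE_I2) (auto simp: indicator_def)
    have "(\<lambda>z. indicator A (R z) * cnj (indicator B z :: complex)) \<in> borel_measurable Zsp"
      using A B borel_measurable_comp_measure_preserving[OF that, of "\<lambda>z. indicator A z :: complex"]
      by (intro borel_measurable_times borel_measurable_cnj) auto
    from borel_measurable_section[OF this x]
    show "(\<lambda>y. indicator A (R (x, y)) * cnj (indicator B (x, y) :: complex)) \<in> borel_measurable I01"
      by simp
  qed
  have "ennreal (cmod (cond_inner S (\<lambda>z. indicator A z) (\<lambda>z. indicator B z) x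
                      - cond_inner T (\<lambda>z. indicator A z) (\<lambda>z. indicator B z) x))
      \<le> (\<integral>\<^sup>+y. ennreal (cmod (indicator A (S (x, y)) * cnj (indicator B (x, y) :: complex)
                              - indicator A (T (x, y)) * cnj (indicator B (x, y) :: complex))) \<partial>I01)"
    unfolding cond_inner_def condX_def Bochner_Integration.integral_diff[OF int[OF S] int[OF T], symmetric]
    by (rule ennreal_norm_integral_le)
  also have "\<dots> \<le> (\<integral>\<^sup>+y. indicator (sym_diff (S -` A \<inter> space Zsp) (T -` A \<inter> space Zsp)) (x, y) \<partial>I01)"
    using x by (intro nn_integral_mono) (auto simp: indicator_def)
  finally show ?thesis .
qed

lemma cond_inner_indicator_sq_le:
  "ennreal ((cmod (cond_inner S (\<lambda>z. indicator A z) (\<lambda>z. indicator B z) x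
                    - cond_inner R0 (\<lambda>z. indicator A z) (\<lambda>z. indicator B z) x))\<^sup>2)
    \<le> ennreal ((cmod (cond_inner T (\<lambda>z. indicator A z) (\<lambda>z. indicator B z) x
                      - cond_inner R0 (\<lambda>z. indicator A z) (\<lambda>z. indicator B z) x))\<^sup>2)
      + 4 * ennreal (cmod (cond_inner S (\<lambda>z. indicator A z) (\<lambda>z. indicator B z) x
                           - cond_inner T (\<lambda>z. indicator A z) (\<lambda>z. indicator B z) x))"
  (is "ennreal ((cmod (?S - ?R0))\<^sup>2) \<le> ennreal ((cmod (?T - ?R0))\<^sup>2) + 4 * ennreal (cmod (?S - ?T))")
proof -
  have le2: "cmod (cond_inner R (\<lambda>z. indicator A z) (\<lambda>z. indicator B z) x - ?R0) \<le> 2" for R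
    using norm_triangle_ineq4[of "cond_inner R (\<lambda>z. indicator A z) (\<lambda>z. indicator B z) x" ?R0]
      cmod_cond_inner_indicator_le[of R A B x] cmod_cond_inner_indicator_le[of R0 A B x] by simp
  have "(cmod (?S - ?R0))\<^sup>2 \<le> (cmod (?T - ?R0))\<^sup>2 + 4 * cmod (?S - ?T)"
    using norm_sq_le_norm_sq_add[OF le2 le2, of S T] by simp
  then have "ennreal ((cmod (?S - ?R0))\<^sup>2) \<le> ennreal ((cmod (?T - ?R0))\<^sup>2 + 4 * cmod (?S - ?T))"
    by (rule ennreal_leI)
  then show ?thesis
    by (simp add: ennreal_mult)
qed

lemma cond_inner_dist_indicator_le:
  assumes S: "measure_preserving Zsp S" and T: "measure_preserving Zsp T" and R0: "measure_preserving Zsp R0"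
    and A: "A \<in> sets Zsp" and B: "B \<in> sets Zsp"
  shows "cond_inner_dist S R0 (\<lambda>z. indicator A z) (\<lambda>z. indicator B z)
    \<le> cond_inner_dist T R0 (\<lambda>z. indicator A z) (\<lambda>z. indicator B z)
      + 4 * ennreal (measure Zsp (sym_diff (S -` A \<inter> space Zsp) (T -` A \<inter> space Zsp)))"
proof -
  let ?f = "\<lambda>z. indicator A z :: complex" and ?g = "\<lambda>z. indicator B z :: complex"
  let ?D = "sym_diff (S -` A \<inter> space Zsp) (T -` A \<inter> space Zsp)"
  have "S -` A \<inter> space Zsp \<in> sets Zsp" "T -` A \<inter> space Zsp \<in> sets Zsp"
    using measurable_sets[OF measure_preserving_measurable[OF S] A]
      measurable_sets[OF measure_preserving_measurable[OF T] A] .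
  then have D: "?D \<in> sets Zsp"
    by (intro sets.Un sets.Diff)
  have meas: "cond_inner R ?f ?g \<in> borel_measurable I01" if "measure_preserving Zsp R" for R
    using A B that by (intro borel_measurable_cond_inner) auto
  define d where "d x = ennreal (cmod (cond_inner S ?f ?g x - cond_inner T ?f ?g x))" for x
  have d_meas: "d \<in> borel_measurable I01"
    unfolding d_def using meas[OF S] meas[OF T] by measurable
  have "cond_inner_dist S R0 ?f ?g
      \<le> (\<integral>\<^sup>+x. ennreal ((cmod (cond_inner T ?f ?g x - cond_inner R0 ?f ?g x))\<^sup>2) + 4 * d x \<partial>I01)"
    unfolding cond_inner_dist_def d_def by (intro nn_integral_mono cond_inner_indicator_sq_le)
  also have "\<dots> = cond_inner_dist T R0 ?f ?g + 4 * (\<integral>\<^sup>+x. d x \<partial>I01)"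
    unfolding cond_inner_dist_def using meas[OF T] meas[OF R0] d_meas
    by (subst nn_integral_add) (auto simp: nn_integral_cmult)
  also have "(\<integral>\<^sup>+x. d x \<partial>I01) \<le> (\<integral>\<^sup>+x. \<integral>\<^sup>+y. indicator ?D (x, y) \<partial>I01 \<partial>I01)"
    unfolding d_def by (intro nn_integral_mono cond_inner_indicator_diff_le S T A B)
  also have "\<dots> = ennreal (measure Zsp ?D)"
    using D by (simp add: nn_integral_Zsp Zsp.emeasure_eq_measure)
  finally show ?thesis
    by (simp add: add_left_mono mult_left_mono)
qed

lemma topspace_weak_top: "topspace (weak_top W) = invmpt W"
  unfolding weak_top_def by auto

lemma openin_weak_top_basic:
  "E \<in> sets W \<Longrightarrow> A \<in> sets W \<Longrightarrow> e > 0 \<Longrightarrow>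
    openin (weak_top W) {S \<in> invmpt W. measure W (sym_diff (S ` E) A) < e}"
  unfolding weak_top_def by (rule topology_generated_by_Basis) blast

(* The telescoping estimate: S^-N A differs from T^-N A by at most the N one-step errors
   S ` T^-(k+1) A versus T^-k A, each of which is controlled by a weak-topology basic set. *)
lemma cond_inner_dist_indicator_funpow_le:
  assumes R0: "measure_preserving Zsp R0" and S: "S \<in> invmpt Zsp" and T: "T \<in> invmpt Zsp"
    and A: "A \<in> sets Zsp" and B: "B \<in> sets Zsp"
    and close: "\<And>k. k < N \<Longrightarrow>
      measure Zsp (sym_diff (S ` ((T ^^ Suc k) -` A \<inter> space Zsp)) ((T ^^ k) -` A \<inter> space Zsp)) \<le> d"
  shows "cond_inner_dist (S ^^ N) R0 (\<lambda>z. indicator A z) (\<lambda>z. indicator B z)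
    \<le> cond_inner_dist (T ^^ N) R0 (\<lambda>z. indicator A z) (\<lambda>z. indicator B z) + ennreal (4 * (real N * d))"
proof -
  let ?D = "sym_diff ((S ^^ N) -` A \<inter> space Zsp) ((T ^^ N) -` A \<inter> space Zsp)"
  have "measure Zsp ?D
      \<le> (\<Sum>k<N. measure Zsp (sym_diff (S ` ((T ^^ Suc k) -` A \<inter> space Zsp)) ((T ^^ k) -` A \<inter> space Zsp)))"
    by (rule measure_sym_diff_funpow_vimage_le[OF Zsp.finite_measure_axioms S T A])
  also have "\<dots> \<le> real N * d"
    using sum_mono[of "{..<N}" _ "\<lambda>_. d"] close by simp
  finally have "ennreal (4 * measure Zsp ?D) \<le> ennreal (4 * (real N * d))"
    by (intro ennreal_leI) simp
  then have small: "4 * ennreal (measure Zsp ?D) \<le> ennreal (4 * (real N * d))"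
    by (simp add: ennreal_mult')
  have "cond_inner_dist (S ^^ N) R0 (\<lambda>z. indicator A z) (\<lambda>z. indicator B z)
      \<le> cond_inner_dist (T ^^ N) R0 (\<lambda>z. indicator A z) (\<lambda>z. indicator B z) + 4 * ennreal (measure Zsp ?D)"
    using S T by (intro cond_inner_dist_indicator_le R0 A B measure_preserving_funpow invmpt_imp_measure_preserving)
  then show ?thesis
    by (rule order_trans[OF _ add_left_mono[OF small]])
qed

lemma ennreal_add_small_less:
  assumes "x < ennreal r" "0 \<le> c"
  shows "\<exists>d>0. x + ennreal (c * d) < ennreal r"
proof -
  define q where "q = enn2real x"
  have "x < top"
    using assms(1) less_trans ennreal_less_top by blast
  then have x: "x = ennreal q"
    by (simp add: q_def)
  have "0 \<le> q" "q < r"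
    using assms(1) unfolding x by (simp_all add: ennreal_less_iff q_def)
  define d where "d = (r - q) / (2 * c + 1)"
  have "d > 0"
    using \<open>q < r\<close> assms(2) by (simp add: d_def)
  have "(r - q) * (c / (2 * c + 1)) < (r - q) * 1"
    using \<open>q < r\<close> assms(2) by (intro mult_strict_left_mono) auto
  then have "c * d < r - q"
    by (simp add: d_def mult.commute)
  then have "ennreal (q + c * d) < ennreal r"
    using \<open>0 \<le> q\<close> \<open>q < r\<close> by (intro ennreal_lessI) auto
  then have "ennreal q + ennreal (c * d) < ennreal r"
    using \<open>0 \<le> q\<close> \<open>d > 0\<close> assms(2) by (subst ennreal_plus[symmetric]) auto
  with \<open>d > 0\<close> show ?thesis
    unfolding x by blast
qed

lemma openin_weak_top_cond_inner_dist_less: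
  assumes R0: "measure_preserving Zsp R0" and A: "A \<in> sets Zsp" and B: "B \<in> sets Zsp"
  shows "openin (weak_top Zsp)
    {T \<in> invmpt Zsp. cond_inner_dist (T ^^ N) R0 (\<lambda>z. indicator A z) (\<lambda>z. indicator B z) < ennreal r}"
    (is "openin _ {T \<in> invmpt Zsp. ?Q T < ennreal r}")
proof (subst openin_subopen, intro ballI)
  fix T
  assume "T \<in> {T \<in> invmpt Zsp. ?Q T < ennreal r}"
  then have T: "T \<in> invmpt Zsp" and "?Q T < ennreal r"
    by auto
  then obtain d where "d > 0" and d: "?Q T + ennreal (4 * real N * d) < ennreal r"
    using ennreal_add_small_less[of "?Q T" r "4 * real N"] by auto
  have vimage_sets: "(T ^^ n) -` A \<inter> space Zsp \<in> sets Zsp" for n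
    using measure_preserving_measurable[OF measure_preserving_funpow[OF invmpt_imp_measure_preserving[OF T]]] A
    by (rule measurable_sets)
  define W where "W = (\<Inter>k<N. {S \<in> invmpt Zsp.
      measure Zsp (sym_diff (S ` ((T ^^ Suc k) -` A \<inter> space Zsp)) ((T ^^ k) -` A \<inter> space Zsp)) < d})
    \<inter> invmpt Zsp"
  have "openin (weak_top Zsp) ((\<Inter>k<N. {S \<in> invmpt Zsp.
      measure Zsp (sym_diff (S ` ((T ^^ Suc k) -` A \<inter> space Zsp)) ((T ^^ k) -` A \<inter> space Zsp)) < d})
    \<inter> topspace (weak_top Zsp))"
    using \<open>d > 0\<close> by (intro openin_INT openin_weak_top_basic vimage_sets) auto
  then have "openin (weak_top Zsp) W"
    unfolding W_def topspace_weak_top .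
  moreover have "T \<in> W"
    unfolding W_def using T \<open>d > 0\<close> invmpt_image_funpow_Suc_vimage[OF T] by simp
  moreover have "W \<subseteq> {T \<in> invmpt Zsp. ?Q T < ennreal r}"
  proof
    fix S
    assume "S \<in> W"
    then have S: "S \<in> invmpt Zsp" and close: "\<And>k. k < N \<Longrightarrow>
        measure Zsp (sym_diff (S ` ((T ^^ Suc k) -` A \<inter> space Zsp)) ((T ^^ k) -` A \<inter> space Zsp)) \<le> d"
      unfolding W_def by (auto simp: less_imp_le)
    have "?Q S \<le> ?Q T + ennreal (4 * (real N * d))"
      by (rule cond_inner_dist_indicator_funpow_le[OF R0 S T A B close])
    also have "\<dots> < ennreal r"
      using d by (simp add: mult.assoc)
    finally show "S \<in> {T \<in> invmpt Zsp. ?Q T < ennreal r}"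
      using S by simp
  qed
  ultimately show "\<exists>W. openin (weak_top Zsp) W \<and> T \<in> W \<and> W \<subseteq> {T \<in> invmpt Zsp. ?Q T < ennreal r}"
    by blast
qed

section \<open>Rigid extensions\<close>

definition lift_base :: "(real \<Rightarrow> real) \<Rightarrow> real \<times> real \<Rightarrow> real \<times> real" where
  "lift_base T0 z = (T0 (fst z), snd z)"

lemma measure_preserving_lift_base: "measure_preserving I01 T0 \<Longrightarrow> measure_preserving Zsp (lift_base T0)"
  unfolding Zsp_def lift_base_def[abs_def]
  by (intro measure_preserving_pair_fst) (auto intro: I01.sigma_finite_measure_axioms)

lemma rigid_set_iff:
  "rigid_set T0 = {T \<in> ext_set T0. \<exists>n. strict_mono n \<and> (\<forall>f\<in>L2ZX. \<forall>g\<in>L2ZX.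
      asymp_cond_equiv (\<lambda>k. T ^^ n k) (\<lambda>k. lift_base (T0 ^^ n k)) f g)}"
  by (simp add: rigid_set_def asymp_cond_equiv_def cond_inner_dist_def cond_inner_def lift_base_def)

lemma diagonal_strict_mono:
  assumes ex: "\<And>m. \<exists>N\<ge>m. P m N" and anti: "\<And>m m' N. P m N \<Longrightarrow> m' \<le> m \<Longrightarrow> P m' N"
  shows "\<exists>n. strict_mono n \<and> (\<forall>k. P (Suc k) (n k))"
proof -
  define pick where "pick m = (SOME N. N \<ge> m \<and> P m N)" for m
  have pick: "pick m \<ge> m" "P m (pick m)" for m
    using someI_ex[OF ex[of m]] unfolding pick_def by auto
  define n where "n = rec_nat (pick 1) (\<lambda>k nk. pick (max (k + 2) (nk + 1)))"
  have n_0: "n 0 = pick 1" and n_Suc: "n (Suc k) = pick (max (k + 2) (n k + 1))" for k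
    by (simp_all add: n_def)
  have "strict_mono n"
    unfolding strict_mono_Suc_iff
  proof
    fix k
    have "n k < max (k + 2) (n k + 1)"
      by simp
    also have "\<dots> \<le> n (Suc k)"
      unfolding n_Suc by (rule pick(1))
    finally show "n k < n (Suc k)" .
  qed
  moreover have "P (Suc k) (n k)" for k
  proof (cases k)
    case 0
    then show ?thesis
      using pick(2)[of 1] by (simp add: n_0)
  next
    case (Suc j)
    then show ?thesis
      using anti[OF pick(2)[of "max (j + 2) (n j + 1)"]] by (simp add: n_Suc)
  qed
  ultimately show ?thesis
    by blast
qed

definition rigidity_defect ::
    "(real \<Rightarrow> real) \<Rightarrow> (real \<times> real \<Rightarrow> real \<times> real) \<Rightarrow> nat \<Rightarrow> (real \<times> real) set \<Rightarrow> (real \<times> real) set \<Rightarrow> ennreal"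
  where "rigidity_defect T0 T N A B =
    cond_inner_dist (T ^^ N) (lift_base (T0 ^^ N)) (\<lambda>z. indicator A z) (\<lambda>z. indicator B z)"

definition almost_rigid_set ::
    "(real \<Rightarrow> real) \<Rightarrow> (nat \<Rightarrow> (real \<times> real) set) \<Rightarrow> (nat \<Rightarrow> (real \<times> real) set) \<Rightarrow> nat \<Rightarrow>
     (real \<times> real \<Rightarrow> real \<times> real) set"
  where "almost_rigid_set T0 a b m =
    {T \<in> ext_set T0. \<exists>N\<ge>m. \<forall>i<m. rigidity_defect T0 T N (a i) (b i) < ennreal (1 / Suc m)}"

lemma openin_almost_rigid_set:
  assumes T0: "measure_preserving I01 T0" and ab: "\<And>i. a i \<in> sets Zsp" "\<And>i. b i \<in> sets Zsp"
  shows "openin (subtopology (weak_top Zsp) (ext_set T0)) (almost_rigid_set T0 a b m)"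
proof -
  define U where "U N i = {T \<in> invmpt Zsp. rigidity_defect T0 T N (a i) (b i) < ennreal (1 / Suc m)}" for N i
  have "openin (weak_top Zsp) (U N i)" for N i
    unfolding U_def rigidity_defect_def
    using T0 ab by (intro openin_weak_top_cond_inner_dist_less measure_preserving_lift_base measure_preserving_funpow)
  then have "openin (weak_top Zsp) (\<Union>N\<in>{m..}. (\<Inter>i<m. U N i) \<inter> topspace (weak_top Zsp))"
    by (intro openin_Union) auto
  then have "openin (subtopology (weak_top Zsp) (ext_set T0))
      ((\<Union>N\<in>{m..}. (\<Inter>i<m. U N i) \<inter> topspace (weak_top Zsp)) \<inter> ext_set T0)"
    by (rule openin_subtopology_Int)
  moreover have "(\<Union>N\<in>{m..}. (\<Inter>i<m. U N i) \<inter> topspace (weak_top Zsp)) \<inter> ext_set T0 = almost_rigid_set T0 a b m"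
    by (auto simp: almost_rigid_set_def U_def topspace_weak_top ext_set_def)
  ultimately show ?thesis
    by simp
qed

lemma rigid_set_subset_almost_rigid_set:
  assumes ab: "\<And>i. a i \<in> sets Zsp" "\<And>i. b i \<in> sets Zsp"
  shows "rigid_set T0 \<subseteq> almost_rigid_set T0 a b m"
proof
  fix T
  assume "T \<in> rigid_set T0"
  then obtain n where T: "T \<in> ext_set T0" and n: "strict_mono n"
    and equiv: "\<And>f g. f \<in> L2ZX \<Longrightarrow> g \<in> L2ZX \<Longrightarrow> asymp_cond_equiv (\<lambda>k. T ^^ n k) (\<lambda>k. lift_base (T0 ^^ n k)) f g"
    unfolding rigid_set_iff by blast
  have "(\<lambda>k. rigidity_defect T0 T (n k) (a i) (b i)) \<longlonglongrightarrow> 0" for i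
    using equiv[OF indicator_in_L2ZX[OF ab(1)] indicator_in_L2ZX[OF ab(2)]]
    by (simp add: asymp_cond_equiv_def rigidity_defect_def)
  moreover have "0 < ennreal (1 / Suc m)"
    by simp
  ultimately have "eventually (\<lambda>k. rigidity_defect T0 T (n k) (a i) (b i) < ennreal (1 / Suc m)) sequentially" for i
    by (rule order_tendstoD(2))
  then have "\<forall>i\<in>{..<m}. eventually (\<lambda>k. rigidity_defect T0 T (n k) (a i) (b i) < ennreal (1 / Suc m)) sequentially"
    by blast
  then have "eventually (\<lambda>k. \<forall>i\<in>{..<m}. rigidity_defect T0 T (n k) (a i) (b i) < ennreal (1 / Suc m)) sequentially"
    by (rule eventually_ball_finite[rotated]) simp
  then have "eventually (\<lambda>k. m \<le> k \<and> (\<forall>i<m. rigidity_defect T0 T (n k) (a i) (b i) < ennreal (1 / Suc m))) sequentially"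
    using eventually_ge_at_top[of m] by eventually_elim auto
  then obtain k where "m \<le> k" "\<forall>i<m. rigidity_defect T0 T (n k) (a i) (b i) < ennreal (1 / Suc m)"
    by (auto simp: eventually_sequentially)
  moreover have "k \<le> n k"
    using n by (rule seq_suble)
  ultimately show "T \<in> almost_rigid_set T0 a b m"
    unfolding almost_rigid_set_def using T by (auto intro!: exI[of _ "n k"])
qed

lemma ennreal_tendsto_zero_if_less_inverse:
  fixes x :: "nat \<Rightarrow> ennreal"
  assumes "eventually (\<lambda>k. x k < ennreal (1 / Suc k)) sequentially"
  shows "x \<longlonglongrightarrow> 0"
proof (rule tendsto_sandwich[OF _ _ tendsto_const])
  show "eventually (\<lambda>k. x k \<le> ennreal (inverse (Suc k))) sequentially"
    using assms by eventually_elim (simp add: inverse_eq_divide)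
  show "(\<lambda>k. ennreal (inverse (Suc k))) \<longlonglongrightarrow> 0"
    using tendsto_ennrealI[OF LIMSEQ_inverse_real_of_nat] by simp
qed simp

lemma Inter_almost_rigid_set_imp_defect_tendsto_zero:
  assumes T: "T \<in> (\<Inter>m. almost_rigid_set T0 a b m)"
  shows "\<exists>n. strict_mono n \<and> (\<forall>i. (\<lambda>k. rigidity_defect T0 T (n k) (a i) (b i)) \<longlonglongrightarrow> 0)"
proof -
  let ?P = "\<lambda>m N. \<forall>i<m. rigidity_defect T0 T N (a i) (b i) < ennreal (1 / Suc m)"
  have "\<exists>n. strict_mono n \<and> (\<forall>k. ?P (Suc k) (n k))"
  proof (rule diagonal_strict_mono)
    show "\<exists>N\<ge>m. ?P m N" for m
      using T by (auto simp: almost_rigid_set_def)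
    show "?P m' N" if P: "?P m N" and "m' \<le> m" for m m' N
    proof (intro allI impI)
      fix i
      assume "i < m'"
      then have "rigidity_defect T0 T N (a i) (b i) < ennreal (1 / Suc m)"
        using P \<open>m' \<le> m\<close> by auto
      also have "\<dots> \<le> ennreal (1 / Suc m')"
        using \<open>m' \<le> m\<close> by (intro ennreal_leI) (simp add: frac_le)
      finally show "rigidity_defect T0 T N (a i) (b i) < ennreal (1 / Suc m')" .
    qed
  qed
  then obtain n where n: "strict_mono n" and P: "\<And>k. ?P (Suc k) (n k)"
    by blast
  have "(\<lambda>k. rigidity_defect T0 T (n k) (a i) (b i)) \<longlonglongrightarrow> 0" for i
    using eventually_ge_at_top[of i]
  proof (rule ennreal_tendsto_zero_if_less_inverse[OF eventually_mono])
    fix k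
    assume "i \<le> k"
    then have "rigidity_defect T0 T (n k) (a i) (b i) < ennreal (1 / Suc (Suc k))"
      using P[of k] by simp
    also have "\<dots> \<le> ennreal (1 / Suc k)"
      by (intro ennreal_leI) (simp add: frac_le)
    finally show "rigidity_defect T0 T (n k) (a i) (b i) < ennreal (1 / Suc k)" .
  qed
  with n show ?thesis
    by blast
qed

lemma Inter_almost_rigid_set_subset_rigid_set:
  assumes T0: "measure_preserving I01 T0"
    and ab: "\<And>A B. A \<in> rectangle_algebra \<Longrightarrow> B \<in> rectangle_algebra \<Longrightarrow> \<exists>i. a i = A \<and> b i = B"
  shows "(\<Inter>m. almost_rigid_set T0 a b m) \<subseteq> rigid_set T0"
proof
  fix T
  assume T: "T \<in> (\<Inter>m. almost_rigid_set T0 a b m)"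
  then have ext: "T \<in> ext_set T0"
    by (auto simp: almost_rigid_set_def)
  obtain n where n: "strict_mono n" and lim: "\<And>i. (\<lambda>k. rigidity_defect T0 T (n k) (a i) (b i)) \<longlonglongrightarrow> 0"
    using Inter_almost_rigid_set_imp_defect_tendsto_zero[OF T] by blast
  have "T \<in> invmpt Zsp"
    using ext by (simp add: ext_set_def)
  then have maps: "measure_preserving Zsp (T ^^ n k)" "measure_preserving Zsp (lift_base (T0 ^^ n k))" for k
    using measure_preserving_lift_base[OF measure_preserving_funpow[OF T0]]
    by (simp_all add: measure_preserving_funpow invmpt_imp_measure_preserving)
  have indicators: "asymp_cond_equiv (\<lambda>k. T ^^ n k) (\<lambda>k. lift_base (T0 ^^ n k)) (\<lambda>z. indicator A z) (\<lambda>z. indicator B z)"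
    if "A \<in> rectangle_algebra" "B \<in> rectangle_algebra" for A B
    using ab[OF that] lim by (auto simp: asymp_cond_equiv_def rigidity_defect_def)
  have "\<forall>f\<in>L2ZX. \<forall>g\<in>L2ZX. asymp_cond_equiv (\<lambda>k. T ^^ n k) (\<lambda>k. lift_base (T0 ^^ n k)) f g"
    using asymp_cond_equiv_L2ZX[where R = "\<lambda>k. T ^^ n k" and S = "\<lambda>k. lift_base (T0 ^^ n k)",
        OF maps rectangle_algebra_sets rectangle_algebra_dense indicators]
    by blast
  then show "T \<in> rigid_set T0"
    unfolding rigid_set_iff using ext n by blast
qed

lemma rectangle_algebra_pair_enumeration:
  obtains a b :: "nat \<Rightarrow> (real \<times> real) set"
  where "\<And>i. a i \<in> sets Zsp" "\<And>i. b i \<in> sets Zsp"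
    and "\<And>A B. A \<in> rectangle_algebra \<Longrightarrow> B \<in> rectangle_algebra \<Longrightarrow> \<exists>i. a i = A \<and> b i = B"
proof -
  let ?R = "rectangle_algebra \<times> rectangle_algebra"
  have "{} \<in> rectangle_algebra"
    unfolding rectangle_algebra_def by (rule empty_in_bool_closure)
  then have R: "?R \<noteq> {}" "countable ?R"
    using countable_rectangle_algebra by auto
  show ?thesis
  proof
    show "fst (from_nat_into ?R i) \<in> sets Zsp" "snd (from_nat_into ?R i) \<in> sets Zsp" for i
      using from_nat_into[OF R(1), of i] rectangle_algebra_sets by auto
    show "\<exists>i. fst (from_nat_into ?R i) = A \<and> snd (from_nat_into ?R i) = B"
      if "A \<in> rectangle_algebra" "B \<in> rectangle_algebra" for A B
    proof -
      have "(A, B) \<in> range (from_nat_into ?R)"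
        using that range_from_nat_into[OF R] by simp
      then obtain i where "(A, B) = from_nat_into ?R i"
        by (rule rangeE)
      then show ?thesis
        by (metis fst_conv snd_conv)
    qed
  qed
qed

theorem proposition4p4:
  fixes T0 :: "real \<Rightarrow> real"
  assumes "T0 \<in> invmpt I01"
  shows "gdelta_in (subtopology (weak_top Zsp) (ext_set T0)) (rigid_set T0)"
proof -
  have T0: "measure_preserving I01 T0"
    using assms by (rule invmpt_imp_measure_preserving)
  obtain a b :: "nat \<Rightarrow> (real \<times> real) set" where ab_sets: "\<And>i. a i \<in> sets Zsp" "\<And>i. b i \<in> sets Zsp"
    and ab_onto: "\<And>A B. A \<in> rectangle_algebra \<Longrightarrow> B \<in> rectangle_algebra \<Longrightarrow> \<exists>i. a i = A \<and> b i = B"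
    by (rule rectangle_algebra_pair_enumeration) (rule that)
  have "rigid_set T0 = (\<Inter>m. almost_rigid_set T0 a b m)"
    using rigid_set_subset_almost_rigid_set[OF ab_sets] Inter_almost_rigid_set_subset_rigid_set[OF T0 ab_onto]
    by (intro equalityI INT_greatest) auto
  moreover have "gdelta_in (subtopology (weak_top Zsp) (ext_set T0)) (\<Inter>m. almost_rigid_set T0 a b m)"
  proof (rule gdelta_in_Inter)
    show "gdelta_in (subtopology (weak_top Zsp) (ext_set T0)) S" if "S \<in> range (almost_rigid_set T0 a b)" for S
      using that openin_almost_rigid_set[OF T0 ab_sets] by (auto intro: open_imp_gdelta_in)
  qed auto
  ultimately show ?thesis
    by simp
qed

end
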